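(* Let $p\in[1,\infty)$, $I=[0,1]$, $f\in L^p(I)$, $n\in\mathbb{N}$, and let $0=x_0<x_1<\dots<x_N=1$. Let $u_i(x)=a_ix+b_i$, $i\in\mathbb{N}_N$, be the affine maps with $u_i(0)=x_{i-1}$, $u_i(1)=x_i$. Let $\alpha_i\in L^\infty(I)$, $i\in\mathbb{N}_N$, satisfy $\Lambda:=\left(\sum_{i=1}^Na_i\|\alpha_i\|_\infty^p\right)^{1/p}<1$. Define $T:L^p(I)\to L^p(I)$ by \[ Tg=f+\sum_{i=1}^N(\alpha_i\circ u_i^{-1})\,\big((g-\widehat M_nf)\circ u_i^{-1}\big)\,\chi_{u_i(I)}. \] Then $T$ is a contraction on $L^p(I)$ with Lipschitz constant $\Lambda$; its unique fixed point $f^\alpha_n\in L^p(I)$ satisfies $f^\alpha_n=f+\sum_{i=1}^N(\alpha_i\circ u_i^{-1})((f^\alpha_n-\widehat M_nf)\circ u_i^{-1})\chi_{u_i(I)}$; and the map $L^p(I)\to L^p(I)$, $f\mapsto f^\alpha_n$, is a bounded linear operator.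
   Context: The integral MKZ operator is $\widehat M_nf(x)=\int_0^1H_n(x,s)f(s)\,ds$, where $H_n(x,s)=\sum_{k=0}^\infty\widehat m_{nk}(x)\chi_{I_k}(s)$, $\widehat m_{nk}(x)=(n+1)\binom{k+n+1}{k}x^k(1-x)^n$, $I_k=\left[\frac{k}{k+n},\frac{k+1}{k+n+1}\right]$, and $\chi_S$ is the indicator function of $S$. *)

theory Defs
  imports "HOL-Analysis.Analysis" "HOL-Probability.Essential_Supremum"
begin

abbreviation LI :: "real measure" where
  "LI \<equiv> lebesgue_on {0..1}"

text \<open>Membership in L^p(I) (functions are represented by representatives real => real;
  only values on [0,1] matter, equality in L^p is a.e. equality on I).\<close>
definition Lp_mem :: "real \<Rightarrow> (real \<Rightarrow> real) \<Rightarrow> bool" where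
  "Lp_mem p g \<longleftrightarrow> g \<in> borel_measurable LI \<and> integrable LI (\<lambda>x. \<bar>g x\<bar> powr p)"

definition Lp_norm :: "real \<Rightarrow> (real \<Rightarrow> real) \<Rightarrow> real" where
  "Lp_norm p g = (\<integral>x. \<bar>g x\<bar> powr p \<partial>LI) powr (1 / p)"

definition Linf_mem :: "(real \<Rightarrow> real) \<Rightarrow> bool" where
  "Linf_mem g \<longleftrightarrow> g \<in> borel_measurable LI \<and> esssup LI (\<lambda>x. ereal \<bar>g x\<bar>) < \<infinity>"

definition Linf_norm :: "(real \<Rightarrow> real) \<Rightarrow> real" where
  "Linf_norm g = real_of_ereal (esssup LI (\<lambda>x. ereal \<bar>g x\<bar>))"

definition mhat :: "nat \<Rightarrow> nat \<Rightarrow> real \<Rightarrow> real" where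
  "mhat n k x = real (n + 1) * real ((k + n + 1) choose k) * x ^ k * (1 - x) ^ n"

definition Ik :: "nat \<Rightarrow> nat \<Rightarrow> real set" where
  "Ik n k = {real k / real (k + n) .. real (k + 1) / real (k + n + 1)}"

definition Hn :: "nat \<Rightarrow> real \<Rightarrow> real \<Rightarrow> real" where
  "Hn n x s = (\<Sum>k. mhat n k x * indicator (Ik n k) s)"

definition Mhat :: "nat \<Rightarrow> (real \<Rightarrow> real) \<Rightarrow> real \<Rightarrow> real" where
  "Mhat n f x = (\<integral>s. Hn n x s * f s \<partial>LI)"

text \<open>The operator T (depending on f), with u_i t = a_i t + b_i and
  u_i^{-1} y = (y - b_i) / a_i.\<close>
definition Top :: "nat \<Rightarrow> nat \<Rightarrow> (nat \<Rightarrow> real) \<Rightarrow> (nat \<Rightarrow> real) \<Rightarrow> (nat \<Rightarrow> real \<Rightarrow> real)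
    \<Rightarrow> (real \<Rightarrow> real) \<Rightarrow> (real \<Rightarrow> real) \<Rightarrow> real \<Rightarrow> real" where
  "Top n N a b alpha f g y = f y + (\<Sum>i=1..N.
      alpha i ((y - b i) / a i) * (g ((y - b i) / a i) - Mhat n f ((y - b i) / a i))
      * indicator ((\<lambda>t. a i * t + b i) ` {0..1}) y)"

end

theory Submission
  imports Defs "HOL-Probability.Probability_Measure"
begin

text \<open>Write \<open>T g = f - A (M\<^sub>n f) + A g\<close> with the linear operator
  \<open>A g = \<Sum>\<^sub>i (\<alpha>\<^sub>i \<circ> u\<^sub>i\<^sup>-\<^sup>1) (g \<circ> u\<^sub>i\<^sup>-\<^sup>1) \<chi>\<^bsub>u\<^sub>i(I)\<^esub>\<close>. The pieces \<open>u\<^sub>i(I)\<close> overlap only at the knots and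
  the substitution \<open>y = u\<^sub>i(t)\<close> contributes the factor \<open>a\<^sub>i\<close>, so
  \<open>\<parallel>A g\<parallel>\<^sub>p\<^sup>p \<le> \<Sum>\<^sub>i a\<^sub>i \<parallel>\<alpha>\<^sub>i\<parallel>\<^sub>\<infinity>\<^sup>p \<parallel>g\<parallel>\<^sub>p\<^sup>p = \<Lambda>\<^sup>p \<parallel>g\<parallel>\<^sub>p\<^sup>p\<close> and \<open>T\<close> is a \<open>\<Lambda>\<close>-contraction. As \<open>\<Lambda> < 1\<close>,
  the Neumann series \<open>\<Sum>\<^sub>m A\<^sup>m (f - A M\<^sub>n f)\<close> converges in \<open>L\<^sup>p\<close> and is the unique fixed point;
  uniqueness makes \<open>f \<mapsto> f\<^sup>\<alpha>\<^sub>n\<close> linear. Boundedness follows from \<open>\<parallel>M\<^sub>n f\<parallel>\<^sub>p \<le> 2\<^sup>1\<^sup>/\<^sup>p \<parallel>f\<parallel>\<^sub>p\<close>: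
  for \<open>x < 1\<close>, \<open>H\<^sub>n(x, \<cdot>)\<close> is a probability density (a negative binomial series), so Jensen gives
  \<open>|M\<^sub>n f(x)|\<^sup>p \<le> \<integral> H\<^sub>n(x, s) |f(s)|\<^sup>p ds\<close>, while \<open>\<integral> H\<^sub>n(x, s) dx \<le> 2\<close> because each \<open>s\<close> lies in at most
  two intervals \<open>I\<^sub>k\<close> and each \<open>m\<^sub>n\<^sub>k\<close> has integral \<open>1\<close>.\<close>

section \<open>Convexity of the \<open>p\<close>-th power\<close>

lemma powr_convex_comb_le:
  fixes p u v l :: real
  assumes p: "p \<ge> 1" and u: "u \<ge> 0" and v: "v \<ge> 0" and l: "0 \<le> l" "l \<le> 1"
  shows "(l * u + (1 - l) * v) powr p \<le> l * u powr p + (1 - l) * v powr p"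
proof (cases "u > 0 \<and> v > 0")
  case True
  from convex_onD[OF powr_convex[OF p], of "1 - l" u v] show ?thesis
    using True l by (auto simp: algebra_simps)
next
  case False
  have scale: "(c * w) powr p \<le> c * w powr p" if "0 \<le> w" "0 \<le> c" "c \<le> 1" for c w :: real
  proof -
    have "c powr p \<le> c"
    proof (cases "c = 0")
      case False
      then have "c powr p \<le> c powr 1" using that p by (intro powr_mono') auto
      then show ?thesis using False that by simp
    qed (use p in simp)
    then have "c powr p * w powr p \<le> c * w powr p" by (intro mult_right_mono) auto
    then show ?thesis using that by (simp add: powr_mult)
  qed
  show ?thesis
  proof (cases "u = 0")
    case True
    then show ?thesis using scale[of v "1 - l"] v l p by simp
  next
    case False
    then have "v = 0" using \<open>\<not> (u > 0 \<and> v > 0)\<close> u v by auto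
    then show ?thesis using scale[of u l] u l p by simp
  qed
qed

lemma abs_powr_convex_comb_le:
  fixes p x y l :: real
  assumes p: "p \<ge> 1" and l: "0 \<le> l" "l \<le> 1"
  shows "\<bar>l * x + (1 - l) * y\<bar> powr p \<le> l * \<bar>x\<bar> powr p + (1 - l) * \<bar>y\<bar> powr p"
proof -
  have "\<bar>l * x + (1 - l) * y\<bar> \<le> l * \<bar>x\<bar> + (1 - l) * \<bar>y\<bar>"
    using l by (metis abs_mult abs_of_nonneg abs_triangle_ineq diff_ge_0_iff_ge)
  then have "\<bar>l * x + (1 - l) * y\<bar> powr p \<le> (l * \<bar>x\<bar> + (1 - l) * \<bar>y\<bar>) powr p"
    using p by (intro powr_mono2) auto
  also have "\<dots> \<le> l * \<bar>x\<bar> powr p + (1 - l) * \<bar>y\<bar> powr p"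
    by (rule powr_convex_comb_le) (use assms in auto)
  finally show ?thesis .
qed

lemma convex_on_abs_powr: "p \<ge> 1 \<Longrightarrow> convex_on UNIV (\<lambda>t::real. \<bar>t\<bar> powr p)"
proof (intro convex_onI convex_UNIV)
  fix x y t :: real assume "p \<ge> 1" "0 < t" "t < 1"
  then show "\<bar>(1 - t) *\<^sub>R x + t *\<^sub>R y\<bar> powr p \<le> (1 - t) * \<bar>x\<bar> powr p + t * \<bar>y\<bar> powr p"
    using abs_powr_convex_comb_le[of p t y x] by (simp add: algebra_simps)
qed

text \<open>The pointwise step of Minkowski's inequality: \<open>x + y\<close> is a convex combination of \<open>x / A\<close>
  and \<open>y / B\<close> with weights \<open>A / (A + B)\<close> and \<open>B / (A + B)\<close>.\<close>
lemma abs_add_powr_le: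
  fixes p A B x y :: real
  assumes p: "p \<ge> 1" and A: "A > 0" and B: "B > 0"
  shows "\<bar>x + y\<bar> powr p
    \<le> (A + B) powr (p - 1) * (\<bar>x\<bar> powr p / A powr (p - 1) + \<bar>y\<bar> powr p / B powr (p - 1))"
proof -
  define l where "l = A / (A + B)"
  have l: "0 \<le> l" "l \<le> 1" and l': "1 - l = B / (A + B)"
    using A B by (auto simp: l_def field_simps)
  have "l * (x / A) = x / (A + B)" using A by (simp add: l_def)
  moreover have "(1 - l) * (y / B) = y / (A + B)" using B by (simp add: l')
  ultimately have "x + y = (A + B) * (l * (x / A) + (1 - l) * (y / B))"
    using A B by (simp add: add_divide_distrib[symmetric])
  then have "\<bar>x + y\<bar> powr p = (A + B) powr p * \<bar>l * (x / A) + (1 - l) * (y / B)\<bar> powr p"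
    using A B by (simp add: abs_mult powr_mult)
  also have "\<dots> \<le> (A + B) powr p * (l * \<bar>x / A\<bar> powr p + (1 - l) * \<bar>y / B\<bar> powr p)"
    by (intro mult_left_mono abs_powr_convex_comb_le) (use p l in auto)
  also have "l * \<bar>x / A\<bar> powr p = \<bar>x\<bar> powr p / A powr (p - 1) / (A + B)"
    using A B by (simp add: l_def powr_divide powr_diff mult_ac)
  also have "(1 - l) * \<bar>y / B\<bar> powr p = \<bar>y\<bar> powr p / B powr (p - 1) / (A + B)"
    using A B by (simp add: l' powr_divide powr_diff mult_ac)
  also have "(A + B) powr p * (u / (A + B) + v / (A + B)) = (A + B) powr (p - 1) * (u + v)" for u v
  proof -
    have "(A + B) powr p = (A + B) powr (p - 1) * (A + B)" using A B by (simp add: powr_diff)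
    then show ?thesis using A B by (simp add: add_divide_distrib[symmetric])
  qed
  finally show ?thesis .
qed


section \<open>The space \<open>L\<^sup>p\<close> on the unit interval\<close>

lemma Lp_norm_nonneg: "Lp_norm p g \<ge> 0"
  unfolding Lp_norm_def by simp

lemma Lp_mem_measurable: "Lp_mem p g \<Longrightarrow> g \<in> borel_measurable LI"
  unfolding Lp_mem_def by simp

lemma Lp_mem_integrable: "Lp_mem p g \<Longrightarrow> integrable LI (\<lambda>x. \<bar>g x\<bar> powr p)"
  unfolding Lp_mem_def by simp

lemma Lp_norm_powr:
  assumes "p \<ge> 1"
  shows "Lp_norm p g powr p = (\<integral>x. \<bar>g x\<bar> powr p \<partial>LI)"
  using assms unfolding Lp_norm_def by (simp add: powr_powr Bochner_Integration.integral_nonneg)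

lemma Lp_mem_iff_nn_integral:
  assumes "g \<in> borel_measurable LI"
  shows "Lp_mem p g \<longleftrightarrow> (\<integral>\<^sup>+ x. ennreal (\<bar>g x\<bar> powr p) \<partial>LI) < \<infinity>"
  unfolding Lp_mem_def integrable_iff_bounded using assms by auto

lemma nn_integral_abs_powr_eq_Lp_norm:
  assumes "p \<ge> 1" and "Lp_mem p g"
  shows "(\<integral>\<^sup>+ x. ennreal (\<bar>g x\<bar> powr p) \<partial>LI) = ennreal (Lp_norm p g powr p)"
  using nn_integral_eq_integral[OF Lp_mem_integrable[OF assms(2)]] Lp_norm_powr[OF assms(1)]
  by simp

lemma Lp_mem_zero: "Lp_mem p (\<lambda>x. 0)"
  unfolding Lp_mem_def by auto

lemma Lp_dominated:
  assumes p: "p \<ge> 1" and h: "Lp_mem p h" and g: "g \<in> borel_measurable LI"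
    and le: "AE x in LI. \<bar>g x\<bar> \<le> \<bar>h x\<bar>"
  shows "Lp_mem p g" "Lp_norm p g \<le> Lp_norm p h"
proof -
  have hi: "integrable LI (\<lambda>x. \<bar>h x\<bar> powr p)" using h by (rule Lp_mem_integrable)
  have le_powr: "AE x in LI. \<bar>g x\<bar> powr p \<le> \<bar>h x\<bar> powr p"
    using le by eventually_elim (use p in \<open>auto intro: powr_mono2\<close>)
  have gi: "integrable LI (\<lambda>x. \<bar>g x\<bar> powr p)"
    by (rule Bochner_Integration.integrable_bound[OF hi]) (use g le_powr in auto)
  show "Lp_mem p g" using g gi unfolding Lp_mem_def by simp
  have "(\<integral>x. \<bar>g x\<bar> powr p \<partial>LI) \<le> (\<integral>x. \<bar>h x\<bar> powr p \<partial>LI)"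
    by (rule integral_mono_AE[OF gi hi le_powr])
  then show "Lp_norm p g \<le> Lp_norm p h" unfolding Lp_norm_def
    using p by (intro powr_mono2) (auto intro!: Bochner_Integration.integral_nonneg)
qed

lemma Lp_AE_cong:
  assumes g: "g \<in> borel_measurable LI" and h: "h \<in> borel_measurable LI"
    and eq: "AE x in LI. g x = h x"
  shows "Lp_norm p g = Lp_norm p h" "Lp_mem p g \<longleftrightarrow> Lp_mem p h"
proof -
  have eq_powr: "AE x in LI. \<bar>g x\<bar> powr p = \<bar>h x\<bar> powr p" using eq by eventually_elim simp
  have "(\<integral>x. \<bar>g x\<bar> powr p \<partial>LI) = (\<integral>x. \<bar>h x\<bar> powr p \<partial>LI)"
    by (rule integral_cong_AE) (use g h eq_powr in auto)
  then show "Lp_norm p g = Lp_norm p h" unfolding Lp_norm_def by simp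
  have "integrable LI (\<lambda>x. \<bar>g x\<bar> powr p) \<longleftrightarrow> integrable LI (\<lambda>x. \<bar>h x\<bar> powr p)"
    by (rule integrable_cong_AE) (use g h eq_powr in auto)
  then show "Lp_mem p g \<longleftrightarrow> Lp_mem p h" using g h unfolding Lp_mem_def by simp
qed

lemma Lp_norm_eq_0_AE:
  assumes p: "p \<ge> 1" and g: "Lp_mem p g" and "Lp_norm p g = 0"
  shows "AE x in LI. g x = 0"
proof -
  have "(\<integral>x. \<bar>g x\<bar> powr p \<partial>LI) = 0"
    using Lp_norm_powr[OF p, of g] assms(3) p by simp
  then have "AE x in LI. \<bar>g x\<bar> powr p = 0"
    using integral_nonneg_eq_0_iff_AE[OF Lp_mem_integrable[OF g]] by auto
  then show ?thesis by eventually_elim simp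
qed

lemma Lp_mem_cmult: "Lp_mem p g \<Longrightarrow> Lp_mem p (\<lambda>x. c * g x)"
  unfolding Lp_mem_def by (auto simp: abs_mult powr_mult)

lemma Lp_norm_cmult:
  assumes "p \<ge> 1"
  shows "Lp_norm p (\<lambda>x. c * g x) = \<bar>c\<bar> * Lp_norm p g"
  using assms unfolding Lp_norm_def
  by (simp add: abs_mult powr_mult powr_powr Bochner_Integration.integral_nonneg)

lemma Lp_mem_add:
  assumes p: "p \<ge> 1" and g: "Lp_mem p g" and h: "Lp_mem p h"
  shows "Lp_mem p (\<lambda>x. g x + h x)"
proof -
  have bound: "\<bar>g x + h x\<bar> powr p \<le> 2 powr (p - 1) * (\<bar>g x\<bar> powr p + \<bar>h x\<bar> powr p)" for x
    using abs_add_powr_le[OF p, of 1 1 "g x" "h x"] by simp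
  have "integrable LI (\<lambda>x. \<bar>g x + h x\<bar> powr p)"
    by (rule Bochner_Integration.integrable_bound
        [where f="\<lambda>x. 2 powr (p - 1) * (\<bar>g x\<bar> powr p + \<bar>h x\<bar> powr p)"])
      (use bound Lp_mem_integrable[OF g] Lp_mem_integrable[OF h]
        Lp_mem_measurable[OF g] Lp_mem_measurable[OF h] in auto)
  then show ?thesis using g h unfolding Lp_mem_def by auto
qed

lemma Lp_mem_diff:
  assumes "p \<ge> 1" and "Lp_mem p g" and "Lp_mem p h"
  shows "Lp_mem p (\<lambda>x. g x - h x)"
  using Lp_mem_add[OF assms(1,2) Lp_mem_cmult[OF assms(3), of "-1"]] by simp

lemma Lp_mem_abs: "Lp_mem p g \<Longrightarrow> Lp_mem p (\<lambda>x. \<bar>g x\<bar>)"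
  unfolding Lp_mem_def by auto

lemma Lp_norm_abs: "Lp_norm p (\<lambda>x. \<bar>g x\<bar>) = Lp_norm p g"
  unfolding Lp_norm_def by simp

lemma Lp_norm_triangle:
  assumes p: "p \<ge> 1" and g: "Lp_mem p g" and h: "Lp_mem p h"
  shows "Lp_norm p (\<lambda>x. g x + h x) \<le> Lp_norm p g + Lp_norm p h"
proof -
  define A B where "A = Lp_norm p g" and "B = Lp_norm p h"
  have gm: "g \<in> borel_measurable LI" and hm: "h \<in> borel_measurable LI"
    using g h by (auto intro: Lp_mem_measurable)
  have "A \<ge> 0" "B \<ge> 0" unfolding A_def B_def by (rule Lp_norm_nonneg)+
  then consider "A = 0" | "B = 0" | "A > 0" "B > 0" by linarith
  then show ?thesis
  proof cases
    case 1
    then have "AE x in LI. g x + h x = h x"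
      using Lp_norm_eq_0_AE[OF p g] by (auto simp: A_def)
    then have "Lp_norm p (\<lambda>x. g x + h x) = Lp_norm p h"
      by (intro Lp_AE_cong(1)) (use gm hm in auto)
    then show ?thesis using 1 by (simp add: A_def)
  next
    case 2
    then have "AE x in LI. g x + h x = g x"
      using Lp_norm_eq_0_AE[OF p h] by (auto simp: B_def)
    then have "Lp_norm p (\<lambda>x. g x + h x) = Lp_norm p g"
      by (intro Lp_AE_cong(1)) (use gm hm in auto)
    then show ?thesis using 2 by (simp add: B_def)
  next
    case 3
    define C where "C = (A + B) powr (p - 1)"
    have "(\<integral>x. \<bar>g x + h x\<bar> powr p \<partial>LI)
        \<le> (\<integral>x. C * (\<bar>g x\<bar> powr p / A powr (p - 1) + \<bar>h x\<bar> powr p / B powr (p - 1)) \<partial>LI)"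
      by (intro integral_mono Lp_mem_integrable[OF Lp_mem_add[OF p g h]])
        (use Lp_mem_integrable[OF g] Lp_mem_integrable[OF h] abs_add_powr_le[OF p 3]
          in \<open>auto simp: C_def\<close>)
    also have "\<dots> = C * (A powr p / A powr (p - 1) + B powr p / B powr (p - 1))"
      using Lp_mem_integrable[OF g] Lp_mem_integrable[OF h] Lp_norm_powr[OF p]
      by (simp add: A_def B_def)
    also have "\<dots> = (A + B) powr p"
      using 3 by (simp add: C_def powr_diff)
    finally have "(\<integral>x. \<bar>g x + h x\<bar> powr p \<partial>LI) \<le> (A + B) powr p" .
    then have "Lp_norm p (\<lambda>x. g x + h x) \<le> ((A + B) powr p) powr (1 / p)"
      unfolding Lp_norm_def using p
      by (intro powr_mono2) (auto intro!: Bochner_Integration.integral_nonneg)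
    also have "\<dots> = A + B" using p 3 by (simp add: powr_powr)
    finally show ?thesis by (simp add: A_def B_def)
  qed
qed

lemma Lp_norm_triangle_diff:
  assumes "p \<ge> 1" and "Lp_mem p g" and "Lp_mem p h"
  shows "Lp_norm p (\<lambda>x. g x - h x) \<le> Lp_norm p g + Lp_norm p h"
  using Lp_norm_triangle[OF assms(1,2) Lp_mem_cmult[OF assms(3), of "-1"]]
    Lp_norm_cmult[OF assms(1), of "-1" h]
  by simp

lemma finite_measure_LI: "finite_measure LI"
  by (rule finite_measure_lebesgue_on) simp

lemma integrable_Lp:
  assumes p: "p \<ge> 1" and f: "Lp_mem p f"
  shows "integrable LI f"
proof -
  have bound: "\<bar>f x\<bar> \<le> 1 + \<bar>f x\<bar> powr p" for x
  proof (cases "\<bar>f x\<bar> \<le> 1")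
    case False
    then have "\<bar>f x\<bar> powr 1 \<le> \<bar>f x\<bar> powr p" using p by (intro powr_mono) auto
    then show ?thesis using False by simp
  qed (simp add: add_increasing2)
  have "integrable LI (\<lambda>x. 1 + \<bar>f x\<bar> powr p)"
    using finite_measure.integrable_const[OF finite_measure_LI] Lp_mem_integrable[OF f] by simp
  then show ?thesis
    by (rule Bochner_Integration.integrable_bound) (use bound Lp_mem_measurable[OF f] in auto)
qed

lemma AE_LI_not_in_finite: "finite F \<Longrightarrow> AE y in LI. y \<notin> F"
proof -
  assume "finite F"
  then have "F \<in> null_sets lebesgue"
    using finite_imp_null_set_lborel[of F] by (simp add: null_sets_completionI)
  then have "AE y in lebesgue. y \<notin> F" by (rule AE_not_in)
  then show ?thesis by (subst AE_restrict_space_iff) (auto elim: eventually_mono)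
qed

lemma summable_abs_if_partial_sums_powr_bounded:
  fixes g :: "nat \<Rightarrow> real"
  assumes p: "p > 0" and bounded: "\<And>K. (\<Sum>m<K. \<bar>g m\<bar>) powr p \<le> c"
  shows "summable (\<lambda>m. \<bar>g m\<bar>)" "\<bar>\<Sum>m. g m\<bar> powr p \<le> c"
proof -
  have c: "c \<ge> 0" using bounded[of 0] by simp
  have partial: "(\<Sum>m<K. \<bar>g m\<bar>) \<le> c powr (1 / p)" for K
  proof -
    have "(\<Sum>m<K. \<bar>g m\<bar>) = ((\<Sum>m<K. \<bar>g m\<bar>) powr p) powr (1 / p)"
      using p by (simp add: powr_powr sum_nonneg)
    also have "\<dots> \<le> c powr (1 / p)" using bounded[of K] p by (intro powr_mono2) auto
    finally show ?thesis .
  qed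
  show summable: "summable (\<lambda>m. \<bar>g m\<bar>)"
  proof (rule bounded_imp_summable)
    fix n show "(\<Sum>k\<le>n. \<bar>g k\<bar>) \<le> c powr (1 / p)"
      using partial[of "Suc n"] by (simp add: lessThan_Suc_atMost)
  qed simp
  define G where "G = (\<Sum>m. \<bar>g m\<bar>)"
  have "G powr p \<le> c"
  proof (cases "G = 0")
    case False
    have "(\<lambda>K. \<Sum>m<K. \<bar>g m\<bar>) \<longlonglongrightarrow> G" unfolding G_def by (rule summable_LIMSEQ[OF summable])
    then have "(\<lambda>K. (\<Sum>m<K. \<bar>g m\<bar>) powr p) \<longlonglongrightarrow> G powr p"
      by (rule tendsto_powr[OF _ tendsto_const]) (use False in simp)
    then show ?thesis by (rule LIMSEQ_le_const2) (use bounded in auto)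
  qed (use c in simp)
  moreover have "\<bar>\<Sum>m. g m\<bar> powr p \<le> G powr p"
    unfolding G_def using summable_rabs[OF summable] p by (intro powr_mono2) auto
  ultimately show "\<bar>\<Sum>m. g m\<bar> powr p \<le> c" by linarith
qed

lemma Lp_norm_sum_abs_le:
  fixes g :: "nat \<Rightarrow> real \<Rightarrow> real" and K :: nat
  assumes p: "p \<ge> 1" and g: "\<And>m. Lp_mem p (g m)"
  shows "Lp_mem p (\<lambda>y. \<Sum>m<K. \<bar>g m y\<bar>) \<and> Lp_norm p (\<lambda>y. \<Sum>m<K. \<bar>g m y\<bar>) \<le> (\<Sum>m<K. Lp_norm p (g m))"
proof (induction K)
  case 0
  show ?case using Lp_mem_zero by (simp add: Lp_norm_def)
next
  case (Suc K)
  have "Lp_norm p (\<lambda>y. \<Sum>m<Suc K. \<bar>g m y\<bar>)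
      \<le> Lp_norm p (\<lambda>y. \<Sum>m<K. \<bar>g m y\<bar>) + Lp_norm p (\<lambda>y. \<bar>g K y\<bar>)"
    using Lp_norm_triangle[OF p _ Lp_mem_abs[OF g]] Suc by simp
  then show ?case
    using Suc Lp_mem_add[OF p _ Lp_mem_abs[OF g]] by (simp add: Lp_norm_abs)
qed

text \<open>Completeness of \<open>L\<^sup>p\<close> in the form needed for Neumann series: by monotone convergence,
  \<open>(\<Sum>\<^sub>m \<bar>g\<^sub>m\<bar>)\<^sup>p\<close> has integral at most \<open>(\<Sum>\<^sub>m \<parallel>g\<^sub>m\<parallel>\<^sub>p)\<^sup>p\<close>, so it is finite almost everywhere.\<close>
lemma Lp_mem_suminf:
  fixes g :: "nat \<Rightarrow> real \<Rightarrow> real"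
  assumes p: "p \<ge> 1" and g: "\<And>m. Lp_mem p (g m)" and summable: "summable (\<lambda>m. Lp_norm p (g m))"
  shows "AE y in LI. summable (\<lambda>m. \<bar>g m y\<bar>)" "Lp_mem p (\<lambda>y. \<Sum>m. g m y)"
proof -
  define P where "P K y = (\<Sum>m<K. \<bar>g m y\<bar>)" for K y
  define B where "B = (\<Sum>m. Lp_norm p (g m))"
  define Q where "Q y = (SUP K. ennreal (P K y powr p))" for y
  have gm: "g m \<in> borel_measurable LI" for m using g by (rule Lp_mem_measurable)
  have P: "Lp_mem p (P K)" "Lp_norm p (P K) \<le> B" for K
    using Lp_norm_sum_abs_le[where g=g and K=K, OF p g] sum_le_suminf[OF summable, of "{..<K}"]
    by (auto simp: P_def[abs_def] B_def Lp_norm_nonneg)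
  have mono: "incseq (\<lambda>K y. ennreal (P K y powr p))"
    using p by (intro incseq_SucI le_funI ennreal_leI powr_mono2) (auto simp: P_def sum_nonneg)
  have "(\<integral>\<^sup>+ y. Q y \<partial>LI) = (SUP K. (\<integral>\<^sup>+ y. ennreal (P K y powr p) \<partial>LI))"
    unfolding Q_def
    by (rule nn_integral_monotone_convergence_SUP[OF mono]) (use P(1) Lp_mem_measurable in auto)
  also have "\<dots> \<le> ennreal (B powr p)"
  proof (rule SUP_least)
    fix K
    have "(\<integral>\<^sup>+ y. ennreal (P K y powr p) \<partial>LI) = ennreal (Lp_norm p (P K) powr p)"
      using nn_integral_abs_powr_eq_Lp_norm[OF p P(1)] by (simp add: P_def sum_nonneg)
    also have "\<dots> \<le> ennreal (B powr p)"
      using P(2) p by (intro ennreal_leI powr_mono2) (auto simp: Lp_norm_nonneg)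
    finally show "(\<integral>\<^sup>+ y. ennreal (P K y powr p) \<partial>LI) \<le> ennreal (B powr p)" .
  qed
  finally have Q_int: "(\<integral>\<^sup>+ y. Q y \<partial>LI) \<le> ennreal (B powr p)" .
  have AE_finite: "AE y in LI. Q y \<noteq> \<infinity>"
    by (rule nn_integral_PInf_AE) (use Q_int gm in \<open>auto simp: Q_def P_def top_unique\<close>)
  have pointwise: "summable (\<lambda>m. \<bar>g m y\<bar>) \<and> ennreal (\<bar>\<Sum>m. g m y\<bar> powr p) \<le> Q y"
    if "Q y \<noteq> \<infinity>" for y
  proof -
    define c where "c = enn2real (Q y)"
    have Q_eq: "Q y = ennreal c" and c: "c \<ge> 0" using that by (auto simp: c_def less_top)
    have "P K y powr p \<le> c" for K
    proof -
      have "ennreal (P K y powr p) \<le> Q y" unfolding Q_def by (rule SUP_upper) simp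
      then show ?thesis using Q_eq c by simp
    qed
    from summable_abs_if_partial_sums_powr_bounded[of p "\<lambda>m. g m y", OF _ this[unfolded P_def]]
    show ?thesis using p Q_eq by (auto intro: ennreal_leI)
  qed
  show "AE y in LI. summable (\<lambda>m. \<bar>g m y\<bar>)"
    using AE_finite by eventually_elim (use pointwise in blast)
  have "(\<integral>\<^sup>+ y. ennreal (\<bar>\<Sum>m. g m y\<bar> powr p) \<partial>LI) \<le> (\<integral>\<^sup>+ y. Q y \<partial>LI)"
    by (rule nn_integral_mono_AE) (use AE_finite pointwise in \<open>auto elim: eventually_mono\<close>)
  also have "\<dots> < \<infinity>" using Q_int by (simp add: le_less_trans)
  finally show "Lp_mem p (\<lambda>y. \<Sum>m. g m y)"
    using Lp_mem_iff_nn_integral[of "\<lambda>y. \<Sum>m. g m y"] gm by auto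
qed

lemma LI_space_nonzero: "emeasure LI (space LI) \<noteq> 0"
  by (simp add: emeasure_restrict_space)

lemma Linf_norm_bound:
  assumes "Linf_mem g"
  shows "AE t in LI. \<bar>g t\<bar> \<le> Linf_norm g" "Linf_norm g \<ge> 0"
proof -
  define E where "E = esssup LI (\<lambda>x. ereal \<bar>g x\<bar>)"
  have E_fin: "E < \<infinity>" using assms by (auto simp: Linf_mem_def E_def)
  have "esssup LI (\<lambda>x. ereal 0) \<le> E" unfolding E_def by (rule esssup_mono) auto
  then have E0: "E \<ge> 0" using esssup_const[OF LI_space_nonzero, of "ereal 0"] by (simp add: zero_ereal_def)
  have "AE t in LI. ereal \<bar>g t\<bar> \<le> E" unfolding E_def by (rule esssup_AE)
  then show "AE t in LI. \<bar>g t\<bar> \<le> Linf_norm g"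
    by eventually_elim (use E0 E_fin in \<open>cases E, auto simp: Linf_norm_def E_def[symmetric]\<close>)
  show "Linf_norm g \<ge> 0"
    using E0 E_fin unfolding Linf_norm_def E_def[symmetric] by (cases E) auto
qed

lemma Lp_mult_Linf:
  assumes p: "p \<ge> 1" and \<alpha>: "Linf_mem \<alpha>" and g: "Lp_mem p g"
  shows "Lp_mem p (\<lambda>t. \<alpha> t * g t)" "Lp_norm p (\<lambda>t. \<alpha> t * g t) \<le> Linf_norm \<alpha> * Lp_norm p g"
proof -
  have meas: "(\<lambda>t. \<alpha> t * g t) \<in> borel_measurable LI"
    using \<alpha> Lp_mem_measurable[OF g] unfolding Linf_mem_def by (intro borel_measurable_times) auto
  have le: "AE t in LI. \<bar>\<alpha> t * g t\<bar> \<le> \<bar>Linf_norm \<alpha> * g t\<bar>"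
    using Linf_norm_bound(1)[OF \<alpha>]
    by eventually_elim (use Linf_norm_bound(2)[OF \<alpha>] in \<open>simp add: abs_mult mult_right_mono\<close>)
  show "Lp_mem p (\<lambda>t. \<alpha> t * g t)"
    by (rule Lp_dominated(1)[OF p Lp_mem_cmult[OF g] meas le])
  have "Lp_norm p (\<lambda>t. \<alpha> t * g t) \<le> Lp_norm p (\<lambda>t. Linf_norm \<alpha> * g t)"
    by (rule Lp_dominated(2)[OF p Lp_mem_cmult[OF g] meas le])
  also have "\<dots> = Linf_norm \<alpha> * Lp_norm p g"
    using Lp_norm_cmult[OF p] Linf_norm_bound(2)[OF \<alpha>] by simp
  finally show "Lp_norm p (\<lambda>t. \<alpha> t * g t) \<le> Linf_norm \<alpha> * Lp_norm p g" .
qed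

section \<open>Affine changes of variables\<close>

lemma measurable_affine_inverse:
  assumes "a \<noteq> 0"
  shows "(\<lambda>y::real. (y - b) / a) \<in> lebesgue \<rightarrow>\<^sub>M lebesgue"
proof -
  have "(\<lambda>x::real. - b / a + (\<Sum>j\<in>Basis. ((1 / a) * (x \<bullet> j)) *\<^sub>R j)) \<in> lebesgue \<rightarrow>\<^sub>M lebesgue"
    by (rule lebesgue_affine_measurable) (use assms in auto)
  moreover have "(\<lambda>x::real. - b / a + (\<Sum>j\<in>Basis. ((1 / a) * (x \<bullet> j)) *\<^sub>R j)) = (\<lambda>y. (y - b) / a)"
    using assms by (auto simp: fun_eq_iff field_simps)
  ultimately show ?thesis by simp
qed

lemma affine_piece_extend_zero:
  fixes \<psi> :: "real \<Rightarrow> 'b::semiring_1"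
  assumes "a > 0"
  shows "(if (y - b) / a \<in> {0..1} then \<psi> ((y - b) / a) else 0) = \<psi> ((y - b) / a) * indicator {b..a+b} y"
proof -
  have "(y - b) / a \<in> {0..1} \<longleftrightarrow> y \<in> {b..a+b}" using assms by (auto simp: field_simps)
  then show ?thesis by (auto simp: indicator_def)
qed

lemma borel_measurable_affine_piece:
  fixes \<psi> :: "real \<Rightarrow> 'b::{topological_space, semiring_1}"
  assumes a: "a > 0" and \<psi>: "\<psi> \<in> borel_measurable LI"
  shows "(\<lambda>y. \<psi> ((y - b) / a) * indicator {b..a+b} y) \<in> borel_measurable LI"
proof -
  have "(\<lambda>t. if t \<in> {0..1} then \<psi> t else 0) \<in> borel_measurable lebesgue"
    using \<psi> measurable_restrict_space_iff[of "{0..1::real}" lebesgue 0 borel \<psi>] by simp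
  moreover have "a \<noteq> 0" using a by simp
  ultimately have "(\<lambda>t. if t \<in> {0..1} then \<psi> t else 0) \<circ> (\<lambda>y. (y - b) / a) \<in> borel_measurable lebesgue"
    using measurable_affine_inverse by (blast intro: measurable_comp)
  then show ?thesis
    unfolding comp_def affine_piece_extend_zero[OF a] by (rule measurable_restrict_space1)
qed

lemma nn_integral_affine_piece:
  fixes \<psi> :: "real \<Rightarrow> ennreal"
  assumes a: "a > 0" and b: "0 \<le> b" "a + b \<le> 1" and \<psi>: "\<psi> \<in> borel_measurable LI"
  shows "(\<integral>\<^sup>+ y. \<psi> ((y - b) / a) * indicator {b..a+b} y \<partial>LI) = ennreal a * (\<integral>\<^sup>+ t. \<psi> t \<partial>LI)"
proof -
  define \<psi>' where "\<psi>' t = (if t \<in> {0..1} then \<psi> t else 0)" for t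
  have \<psi>'_meas: "\<psi>' \<in> borel_measurable lebesgue"
    using \<psi> measurable_restrict_space_iff[of "{0..1::real}" lebesgue 0 borel \<psi>]
    by (simp add: \<psi>'_def[abs_def])
  have piece: "\<psi>' ((y - b) / a) = \<psi> ((y - b) / a) * indicator {b..a+b} y" for y
    unfolding \<psi>'_def using affine_piece_extend_zero[OF a] .
  have "(\<integral>\<^sup>+ y. \<psi> ((y - b) / a) * indicator {b..a+b} y \<partial>LI)
      = (\<integral>\<^sup>+ y. \<psi> ((y - b) / a) * indicator {b..a+b} y * indicator {0..1} y \<partial>lebesgue)"
    by (rule nn_integral_restrict_space) simp
  also have "\<dots> = (\<integral>\<^sup>+ y. \<psi>' ((y - b) / a) \<partial>lebesgue)"
    using a b by (intro nn_integral_cong) (auto simp: piece indicator_def)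
  also have "\<dots> = ennreal a * (\<integral>\<^sup>+ x. \<psi>' x \<partial>lebesgue)"
    using nn_integral_real_affine_lebesgue[of "\<lambda>y. \<psi>' ((y - b) / a)" a b] a
      measurable_comp[OF measurable_affine_inverse[of a b] \<psi>'_meas]
    by (simp add: o_def)
  also have "(\<integral>\<^sup>+ x. \<psi>' x \<partial>lebesgue) = (\<integral>\<^sup>+ x. \<psi> x * indicator {0..1} x \<partial>lebesgue)"
    by (intro nn_integral_cong) (auto simp: \<psi>'_def indicator_def)
  also have "\<dots> = (\<integral>\<^sup>+ x. \<psi> x \<partial>LI)"
    by (rule nn_integral_restrict_space[symmetric]) simp
  finally show ?thesis .
qed

section \<open>The integral MKZ operator\<close>

lemma neg_binomial_sums:
  fixes x :: real
  assumes x: "\<bar>x\<bar> < 1"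
  shows "(\<lambda>k. real ((k + m) choose k) * x ^ k) sums (1 / (1 - x) ^ Suc m)"
proof -
  have "(\<lambda>k. (- real (Suc m) gchoose k) * (- x) ^ k) sums (1 + - x) powr (- real (Suc m))"
    using x by (intro gen_binomial_real) simp
  moreover have "(- real (Suc m) gchoose k) * (- x) ^ k = real ((k + m) choose k) * x ^ k" for k
  proof -
    have "(- real (Suc m) gchoose k) = (-1) ^ k * (real (k + m) gchoose k)"
      by (subst gbinomial_minus) (simp add: add.commute)
    then show ?thesis by (simp add: binomial_gbinomial power_minus')
  qed
  moreover have "(1 + - x) powr (- real (Suc m)) = 1 / (1 - x) ^ Suc m"
  proof -
    have "(1 - x) powr (real (Suc m)) = (1 - x) ^ Suc m" by (rule powr_realpow) (use x in simp)
    then show ?thesis by (subst powr_minus) (simp add: divide_inverse)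
  qed
  ultimately show ?thesis by simp
qed

lemma binomial_Suc_Suc_mult:
  "Suc (Suc m) * Suc m * (Suc (Suc (k + m)) choose k)
     = ((k + m) choose k) * Suc (k + m) * Suc (Suc (k + m))"
proof -
  have sym1: "Suc (Suc (k + m)) choose k = Suc (Suc (k + m)) choose Suc (Suc m)"
    using binomial_symmetric[of k "Suc (Suc (k + m))"] by simp
  have sym2: "(k + m) choose k = (k + m) choose m"
    using binomial_symmetric[of k "k + m"] by simp
  have step1: "Suc (Suc (k + m)) * (Suc (k + m) choose Suc m)
      = (Suc (Suc (k + m)) choose Suc (Suc m)) * Suc (Suc m)"
    by (rule Suc_times_binomial_eq)
  have step2: "Suc (k + m) * ((k + m) choose m) = (Suc (k + m) choose Suc m) * Suc m"
    by (rule Suc_times_binomial_eq)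
  have "Suc (Suc m) * Suc m * (Suc (Suc (k + m)) choose k)
      = ((Suc (Suc (k + m)) choose Suc (Suc m)) * Suc (Suc m)) * Suc m"
    unfolding sym1 by (simp only: mult_ac)
  also have "\<dots> = Suc (Suc (k + m)) * ((Suc (k + m) choose Suc m) * Suc m)"
    unfolding step1[symmetric] by (simp only: mult_ac)
  also have "\<dots> = Suc (Suc (k + m)) * (Suc (k + m) * ((k + m) choose m))"
    unfolding step2 by simp
  also have "\<dots> = ((k + m) choose k) * Suc (k + m) * Suc (Suc (k + m))"
    unfolding sym2 by (simp only: mult_ac)
  finally show ?thesis .
qed

definition mkz_knot :: "nat \<Rightarrow> nat \<Rightarrow> real" where
  "mkz_knot n k = real k / real (k + n)"

lemma Ik_eq: "Ik n k = {mkz_knot n k .. mkz_knot n (Suc k)}"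
  by (simp add: Ik_def mkz_knot_def add_ac)

lemma mkz_knot_diff:
  "n \<ge> 1 \<Longrightarrow> mkz_knot n (Suc k) - mkz_knot n k = real n / (real (k + n) * real (k + n + 1))"
  by (simp add: mkz_knot_def field_simps)

lemma mkz_knot_strict_mono: "n \<ge> 1 \<Longrightarrow> strict_mono (mkz_knot n)"
proof (rule strict_monoI_Suc)
  fix k assume n: "n \<ge> 1"
  have "real n / (real (k + n) * real (k + n + 1)) > 0" using n by simp
  then show "mkz_knot n k < mkz_knot n (Suc k)" using mkz_knot_diff[OF n, of k] by linarith
qed

lemma Ik_subset: "Ik n k \<subseteq> {0..1}"
proof -
  have "real (k + 1) / real (k + n + 1) \<le> 1" by simp
  then show ?thesis unfolding Ik_def by (auto intro: order.trans[rotated])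
qed

lemma mhat_nonneg: "x \<in> {0..1} \<Longrightarrow> mhat n k x \<ge> 0"
  by (simp add: mhat_def)

lemma mhat_times_length_Ik:
  assumes n: "n \<ge> 1"
  shows "mhat n k x * (mkz_knot n (Suc k) - mkz_knot n k)
    = real ((k + (n - 1)) choose k) * x ^ k * (1 - x) ^ n"
proof -
  obtain m where m: "n = Suc m" using n by (cases n) auto
  have binomial: "real (Suc (Suc m)) * real (Suc m) * real (Suc (Suc (k + m)) choose k)
     = real ((k + m) choose k) * (real (Suc (k + m)) * real (Suc (Suc (k + m))))"
    using binomial_Suc_Suc_mult[of m k] by (metis of_nat_mult mult.assoc)
  have "mhat n k x * (mkz_knot n (Suc k) - mkz_knot n k)
      = real (Suc (Suc m)) * real (Suc (Suc (k + m)) choose k) * (x ^ k * (1 - x) ^ n)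
        * (real (Suc m) / (real (Suc (k + m)) * real (Suc (Suc (k + m)))))"
    unfolding mkz_knot_diff[OF n] unfolding mhat_def m by (simp add: ac_simps)
  also have "\<dots> = real (Suc (Suc m)) * real (Suc m) * real (Suc (Suc (k + m)) choose k)
        / (real (Suc (k + m)) * real (Suc (Suc (k + m)))) * (x ^ k * (1 - x) ^ n)"
    by (simp add: divide_inverse mult_ac)
  also have "\<dots> = real ((k + m) choose k) * (x ^ k * (1 - x) ^ n)"
    unfolding binomial by simp
  finally show ?thesis using m by (simp add: mult.assoc)
qed

lemma has_integral_Beta_nat:
  "((\<lambda>t::real. t ^ k * (1 - t) ^ n) has_integral (fact k * fact n / fact (k + n + 1))) {0..1}"
proof -
  have "Gamma (real k + 1) = fact k" "Gamma (real n + 1) = fact n"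
    "Gamma (real k + 1 + (real n + 1)) = fact (k + n + 1)"
    using Gamma_fact[of k] Gamma_fact[of n] Gamma_fact[of "k + n + 1"] by (simp_all add: add_ac)
  then have Beta: "Beta (real k + 1) (real n + 1) = fact k * fact n / fact (k + n + 1)"
    by (simp add: Beta_def)
  have "((\<lambda>t. t powr (real k + 1 - 1) * (1 - t) powr (real n + 1 - 1))
      has_integral Beta (real k + 1) (real n + 1)) {0..1}"
    by (rule has_integral_Beta_real) auto
  then show ?thesis unfolding Beta
  proof (rule has_integral_spike[rotated 2])
    show "negligible {0, 1::real}" by simp
    fix t :: real assume "t \<in> {0..1} - {0, 1}"
    then show "t ^ k * (1 - t) ^ n = t powr (real k + 1 - 1) * (1 - t) powr (real n + 1 - 1)"
      by (simp add: powr_realpow)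
  qed
qed

lemma mhat_has_integral: "(mhat n k has_integral 1) {0..1}"
proof -
  have "real (n + 1) * real ((k + n + 1) choose k) * (fact k * fact n / fact (k + n + 1)) = (1::real)"
  proof -
    have "real ((k + n + 1) choose k) = fact (k + n + 1) / (fact k * fact (n + 1))"
      by (subst binomial_fact) (auto simp: add_ac)
    moreover have "(fact (n + 1) :: real) = real (n + 1) * fact n" by simp
    moreover have "r * (A / (B * (r * C))) * (B * C / A) = 1"
      if "A \<noteq> 0" "B \<noteq> 0" "C \<noteq> 0" "r \<noteq> 0" for A B C r :: real
      using that by (simp add: field_simps)
    ultimately show ?thesis by simp
  qed
  with has_integral_mult_right[OF has_integral_Beta_nat, of "real (n + 1) * real ((k + n + 1) choose k)" k n]
  show ?thesis by (simp add: mhat_def[abs_def] ac_simps)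
qed

lemma nn_integral_mhat: "(\<integral>\<^sup>+ x. ennreal (mhat n k x) \<partial>LI) = 1"
proof -
  have "(\<integral>\<^sup>+ x. ennreal (mhat n k x) \<partial>LI) = (\<integral>\<^sup>+ x. ennreal (mhat n k x) * indicator {0..1} x \<partial>lborel)"
    by (subst nn_integral_restrict_space) (simp_all add: nn_integral_completion)
  also have "\<dots> = (\<integral>\<^sup>+ x. ennreal (indicator {0..1} x * mhat n k x) \<partial>lborel)"
    by (intro nn_integral_cong) (auto simp: indicator_def)
  also have "\<dots> = ennreal 1"
    by (rule nn_integral_has_integral_lebesgue[OF _ mhat_has_integral]) (auto simp: mhat_nonneg)
  finally show ?thesis by simp
qed

lemma sets_Ik[measurable]: "Ik n k \<in> sets LI"
  using Ik_subset[of n k] by (subst sets_restrict_space_iff) (auto simp: Ik_def)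

lemma emeasure_Ik: "n \<ge> 1 \<Longrightarrow> emeasure LI (Ik n k) = ennreal (mkz_knot n (Suc k) - mkz_knot n k)"
  using Ik_subset[of n k] strict_monoD[OF mkz_knot_strict_mono, of n k "Suc k"]
  by (subst emeasure_restrict_space) (auto simp: Ik_eq)

lemma mhat_measurable[measurable]: "mhat n k \<in> borel_measurable LI"
proof -
  have "(\<lambda>x::real. x) \<in> borel_measurable LI"
    using id_borel_measurable_lebesgue_on[of "{0..1::real}"] by (simp add: id_def)
  then show ?thesis unfolding mhat_def[abs_def] by measurable
qed

definition Ik_indices :: "nat \<Rightarrow> real \<Rightarrow> nat set" where
  "Ik_indices n s = {k. s \<in> Ik n k}"

lemma Ik_indices_le_Suc:
  assumes n: "n \<ge> 1" and jk: "j \<in> Ik_indices n s" "k \<in> Ik_indices n s"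
  shows "j \<le> Suc k"
proof -
  have "mkz_knot n j \<le> mkz_knot n (Suc k)" using jk by (auto simp: Ik_indices_def Ik_eq)
  then show ?thesis using strict_mono_less_eq[OF mkz_knot_strict_mono[OF n]] by simp
qed

lemma finite_Ik_indices: "n \<ge> 1 \<Longrightarrow> finite (Ik_indices n s)"
proof (cases "Ik_indices n s = {}")
  case False
  then obtain j where "j \<in> Ik_indices n s" by auto
  moreover assume "n \<ge> 1"
  ultimately have "Ik_indices n s \<subseteq> {..Suc j}" using Ik_indices_le_Suc by blast
  then show ?thesis by (rule finite_subset) simp
qed simp

lemma card_Ik_indices_le: "n \<ge> 1 \<Longrightarrow> card (Ik_indices n s) \<le> 2"
proof (cases "Ik_indices n s = {}")
  case False
  assume n: "n \<ge> 1"
  define j where "j = Min (Ik_indices n s)"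
  have j: "j \<in> Ik_indices n s"
    unfolding j_def using finite_Ik_indices[OF n] False by (rule Min_in)
  have "Ik_indices n s \<subseteq> {j, Suc j}"
  proof
    fix k assume k: "k \<in> Ik_indices n s"
    have "j \<le> k" unfolding j_def using finite_Ik_indices[OF n] k by simp
    moreover have "k \<le> Suc j" by (rule Ik_indices_le_Suc[OF n k j])
    ultimately show "k \<in> {j, Suc j}" by auto
  qed
  then have "card (Ik_indices n s) \<le> card {j, Suc j}" by (rule card_mono[rotated]) simp
  then show ?thesis by simp
qed simp

lemma summable_Hn_terms: "n \<ge> 1 \<Longrightarrow> summable (\<lambda>k. mhat n k x * indicator (Ik n k) s)"
  by (rule summable_finite[OF finite_Ik_indices[of n s]]) (auto simp: Ik_indices_def)

lemma Hn_eq_sum: "n \<ge> 1 \<Longrightarrow> Hn n x s = (\<Sum>k\<in>Ik_indices n s. mhat n k x)"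
  unfolding Hn_def
  by (subst suminf_finite[OF finite_Ik_indices[of n s]]) (auto simp: Ik_indices_def)

lemma Hn_nonneg: "n \<ge> 1 \<Longrightarrow> x \<in> {0..1} \<Longrightarrow> Hn n x s \<ge> 0"
  unfolding Hn_eq_sum by (auto intro!: sum_nonneg mhat_nonneg)

lemma Hn_at_1: "n \<ge> 1 \<Longrightarrow> Hn n 1 s = 0"
  unfolding Hn_eq_sum by (simp add: mhat_def power_0_left)

lemma summable_mhat:
  assumes "\<bar>x\<bar> < 1"
  shows "summable (\<lambda>k. mhat n k x)"
proof -
  have "summable (\<lambda>k. real (n + 1) * (1 - x) ^ n * (real ((k + (n + 1)) choose k) * x ^ k))"
    by (rule summable_mult sums_summable[OF neg_binomial_sums[OF assms]])+
  then show ?thesis by (simp add: mhat_def ac_simps)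
qed

lemma Hn_le_suminf_mhat:
  assumes n: "n \<ge> 1" and x: "0 \<le> x" "x < 1"
  shows "Hn n x s \<le> (\<Sum>k. mhat n k x)"
  unfolding Hn_eq_sum[OF n]
  by (rule sum_le_suminf[OF summable_mhat]) (use x in \<open>auto intro: mhat_nonneg finite_Ik_indices[OF n]\<close>)

lemma Hn_measurable: "(\<lambda>z. Hn n (fst z) (snd z)) \<in> borel_measurable (LI \<Otimes>\<^sub>M LI)"
  unfolding Hn_def by measurable

lemma Hn_measurable_s[measurable]: "(\<lambda>s. Hn n x s) \<in> borel_measurable LI"
  unfolding Hn_def by measurable

lemma Hn_measurable_x[measurable]: "(\<lambda>x. Hn n x s) \<in> borel_measurable LI"
  unfolding Hn_def by measurable

text \<open>For \<open>0 \<le> x < 1\<close>, \<open>H\<^sub>n(x, \<cdot>)\<close> is a probability density on \<open>I\<close>: integrating term by term,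
  \<open>m\<^sub>n\<^sub>k(x) |I\<^sub>k|\<close> are the terms of a negative binomial series summing to 1.\<close>
lemma nn_integral_Hn:
  assumes n: "n \<ge> 1" and x: "0 \<le> x" "x < 1"
  shows "(\<integral>\<^sup>+ s. ennreal (Hn n x s) \<partial>LI) = 1"
proof -
  have terms: "ennreal (Hn n x s) = (\<Sum>k. ennreal (mhat n k x * indicator (Ik n k) s))" for s
    unfolding Hn_def
    by (rule suminf_ennreal2[symmetric]) (use summable_Hn_terms[OF n] x mhat_nonneg in auto)
  have "(\<integral>\<^sup>+ s. ennreal (Hn n x s) \<partial>LI)
      = (\<Sum>k. \<integral>\<^sup>+ s. ennreal (mhat n k x * indicator (Ik n k) s) \<partial>LI)"
    unfolding terms by (rule nn_integral_suminf) measurable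
  also have "\<dots> = (\<Sum>k. ennreal (mhat n k x * (mkz_knot n (Suc k) - mkz_knot n k)))"
  proof (intro suminf_cong)
    fix k
    have "(\<integral>\<^sup>+ s. ennreal (mhat n k x * indicator (Ik n k) s) \<partial>LI)
        = ennreal (mhat n k x) * emeasure LI (Ik n k)"
      by (subst nn_integral_cmult_indicator[symmetric]) (auto intro!: nn_integral_cong
          simp: indicator_def)
    then show "(\<integral>\<^sup>+ s. ennreal (mhat n k x * indicator (Ik n k) s) \<partial>LI)
        = ennreal (mhat n k x * (mkz_knot n (Suc k) - mkz_knot n k))"
      using mhat_nonneg[of x n k] x strict_monoD[OF mkz_knot_strict_mono[OF n], of k "Suc k"]
      by (simp add: emeasure_Ik[OF n] ennreal_mult)
  qed
  also have "\<dots> = (\<Sum>k. ennreal (real ((k + (n - 1)) choose k) * x ^ k * (1 - x) ^ n))"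
    by (simp add: mhat_times_length_Ik[OF n])
  also have "\<dots> = ennreal 1"
  proof -
    have "(\<lambda>k. real ((k + (n - 1)) choose k) * x ^ k * (1 - x) ^ n) sums (1 / (1 - x) ^ Suc (n - 1) * (1 - x) ^ n)"
      using x by (intro sums_mult2 neg_binomial_sums) simp
    moreover have "1 / (1 - x) ^ Suc (n - 1) * (1 - x) ^ n = 1" using n x by simp
    ultimately have "(\<lambda>k. ennreal (real ((k + (n - 1)) choose k) * x ^ k * (1 - x) ^ n)) sums ennreal 1"
      using x by (subst sums_ennreal) auto
    then show ?thesis by (rule sums_unique[symmetric])
  qed
  finally show ?thesis by simp
qed

lemma nn_integral_Hn_le:
  assumes n: "n \<ge> 1"
  shows "(\<integral>\<^sup>+ x. ennreal (Hn n x s) \<partial>LI) \<le> 2"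
proof -
  have "(\<integral>\<^sup>+ x. ennreal (Hn n x s) \<partial>LI) = (\<integral>\<^sup>+ x. (\<Sum>k\<in>Ik_indices n s. ennreal (mhat n k x)) \<partial>LI)"
    by (intro nn_integral_cong) (auto simp: Hn_eq_sum[OF n] mhat_nonneg)
  also have "\<dots> = of_nat (card (Ik_indices n s))"
    by (simp add: nn_integral_sum nn_integral_mhat)
  also have "\<dots> \<le> 2"
    using card_Ik_indices_le[OF n, of s] by (metis of_nat_le_iff of_nat_numeral)
  finally show ?thesis .
qed

lemma integrable_Hn_mult:
  assumes n: "n \<ge> 1" and x: "0 \<le> x" "x < 1" and g: "integrable LI g"
  shows "integrable LI (\<lambda>s. Hn n x s * g s)"
proof (rule Bochner_Integration.integrable_bound[OF integrable_mult_right[OF integrable_abs[OF g]]])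
  show "(\<lambda>s. Hn n x s * g s) \<in> borel_measurable LI" using g by measurable
  have "0 \<le> (\<Sum>k. mhat n k x)"
    using x by (intro suminf_nonneg summable_mhat) (auto intro: mhat_nonneg)
  then show "AE s in LI. norm (Hn n x s * g s) \<le> norm ((\<Sum>k. mhat n k x) * \<bar>g s\<bar>)"
    using Hn_nonneg[OF n] Hn_le_suminf_mhat[OF n x] x
    by (intro AE_I2) (auto simp: abs_mult intro!: mult_right_mono)
qed

text \<open>Jensen's inequality for the probability density \<open>H\<^sub>n(x, \<cdot>)\<close>.\<close>
lemma Mhat_abs_powr_le:
  assumes n: "n \<ge> 1" and x: "0 \<le> x" "x < 1" and p: "p \<ge> 1" and f: "Lp_mem p f"
  shows "\<bar>Mhat n f x\<bar> powr p \<le> (\<integral>s. Hn n x s * \<bar>f s\<bar> powr p \<partial>LI)"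
proof -
  define M where "M = density LI (\<lambda>s. ennreal (Hn n x s))"
  have f_meas: "f \<in> borel_measurable LI" using f by (rule Lp_mem_measurable)
  have Hn: "AE s in LI. 0 \<le> Hn n x s" using Hn_nonneg[OF n] x by simp
  have M: "prob_space M"
  proof (rule prob_spaceI)
    have "emeasure M (space M) = (\<integral>\<^sup>+ s. ennreal (Hn n x s) \<partial>LI)"
      unfolding M_def by (subst emeasure_density) (auto intro!: nn_integral_cong simp: indicator_def)
    then show "emeasure M (space M) = 1" using nn_integral_Hn[OF n x] by simp
  qed
  have "integrable M f"
    unfolding M_def using f_meas Hn integrable_Hn_mult[OF n x integrable_Lp[OF p f]]
    by (subst integrable_density) auto
  moreover have "integrable M (\<lambda>s. \<bar>f s\<bar> powr p)"
    unfolding M_def using f_meas Hn integrable_Hn_mult[OF n x Lp_mem_integrable[OF f]]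
    by (subst integrable_density) auto
  ultimately have "\<bar>integral\<^sup>L M f\<bar> powr p \<le> integral\<^sup>L M (\<lambda>s. \<bar>f s\<bar> powr p)"
    using prob_space.jensens_inequality[OF M _ _ _ _ convex_on_abs_powr[OF p], of f 0 0] by simp
  moreover have "integral\<^sup>L M f = Mhat n f x"
    unfolding M_def Mhat_def by (subst integral_density) (use f_meas Hn in auto)
  moreover have "integral\<^sup>L M (\<lambda>s. \<bar>f s\<bar> powr p) = (\<integral>s. Hn n x s * \<bar>f s\<bar> powr p \<partial>LI)"
    unfolding M_def by (subst integral_density) (use f_meas Hn in auto)
  ultimately show ?thesis by simp
qed

lemma Mhat_at_1: "n \<ge> 1 \<Longrightarrow> Mhat n f 1 = 0"
  unfolding Mhat_def by (simp add: Hn_at_1)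

lemma sigma_finite_LI: "sigma_finite_measure LI"
  using finite_measure_LI by (simp add: finite_measure_def)

lemma Mhat_measurable:
  assumes "f \<in> borel_measurable LI"
  shows "Mhat n f \<in> borel_measurable LI"
proof -
  have "(\<lambda>(x, s). Hn n x s * f s) \<in> borel_measurable (LI \<Otimes>\<^sub>M LI)"
    using Hn_measurable[of n] assms by (simp add: case_prod_beta') measurable
  from sigma_finite_measure.borel_measurable_lebesgue_integral[OF sigma_finite_LI this]
  show ?thesis unfolding Mhat_def[abs_def] .
qed

text \<open>Jensen's inequality pointwise, then Tonelli and the bound \<open>\<integral> H\<^sub>n(x, s) dx \<le> 2\<close>.\<close>
lemma nn_integral_Mhat_abs_powr_le:
  assumes n: "n \<ge> 1" and p: "p \<ge> 1" and f: "Lp_mem p f"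
  shows "(\<integral>\<^sup>+ x. ennreal (\<bar>Mhat n f x\<bar> powr p) \<partial>LI) \<le> 2 * (\<integral>\<^sup>+ s. ennreal (\<bar>f s\<bar> powr p) \<partial>LI)"
proof -
  have f_meas: "f \<in> borel_measurable LI" using f by (rule Lp_mem_measurable)
  interpret pair_sigma_finite LI LI
    unfolding pair_sigma_finite_def using sigma_finite_LI by simp
  have pointwise: "ennreal (\<bar>Mhat n f x\<bar> powr p)
      \<le> (\<integral>\<^sup>+ s. ennreal (Hn n x s) * ennreal (\<bar>f s\<bar> powr p) \<partial>LI)"
    if "x \<in> space LI" for x
  proof (cases "x = 1")
    case False
    then have x: "0 \<le> x" "x < 1" using that by auto
    have "ennreal (\<bar>Mhat n f x\<bar> powr p) \<le> ennreal (\<integral>s. Hn n x s * \<bar>f s\<bar> powr p \<partial>LI)"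
      by (rule ennreal_leI[OF Mhat_abs_powr_le[OF n x p f]])
    also have "\<dots> = (\<integral>\<^sup>+ s. ennreal (Hn n x s * \<bar>f s\<bar> powr p) \<partial>LI)"
      by (rule nn_integral_eq_integral[symmetric, OF integrable_Hn_mult[OF n x Lp_mem_integrable[OF f]]])
         (use Hn_nonneg[OF n] x in auto)
    also have "\<dots> = (\<integral>\<^sup>+ s. ennreal (Hn n x s) * ennreal (\<bar>f s\<bar> powr p) \<partial>LI)"
      by (intro nn_integral_cong) (use Hn_nonneg[OF n] x in \<open>auto simp: ennreal_mult\<close>)
    finally show ?thesis .
  qed (simp add: Mhat_at_1[OF n])
  have meas: "(\<lambda>(x, s). ennreal (Hn n x s) * ennreal (\<bar>f s\<bar> powr p)) \<in> borel_measurable (LI \<Otimes>\<^sub>M LI)"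
    using Hn_measurable[of n] f_meas by (simp add: case_prod_beta') measurable
  have "(\<integral>\<^sup>+ x. ennreal (\<bar>Mhat n f x\<bar> powr p) \<partial>LI)
      \<le> (\<integral>\<^sup>+ x. (\<integral>\<^sup>+ s. ennreal (Hn n x s) * ennreal (\<bar>f s\<bar> powr p) \<partial>LI) \<partial>LI)"
    by (rule nn_integral_mono) (rule pointwise)
  also have "\<dots> = (\<integral>\<^sup>+ s. (\<integral>\<^sup>+ x. ennreal (Hn n x s) * ennreal (\<bar>f s\<bar> powr p) \<partial>LI) \<partial>LI)"
    using Fubini'[of "\<lambda>x s. ennreal (Hn n x s) * ennreal (\<bar>f s\<bar> powr p)"] meas by simp
  also have "\<dots> = (\<integral>\<^sup>+ s. (\<integral>\<^sup>+ x. ennreal (Hn n x s) \<partial>LI) * ennreal (\<bar>f s\<bar> powr p) \<partial>LI)"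
    by (intro nn_integral_cong nn_integral_multc) measurable
  also have "\<dots> \<le> (\<integral>\<^sup>+ s. 2 * ennreal (\<bar>f s\<bar> powr p) \<partial>LI)"
    by (intro nn_integral_mono mult_right_mono nn_integral_Hn_le[OF n]) auto
  also have "\<dots> = 2 * (\<integral>\<^sup>+ s. ennreal (\<bar>f s\<bar> powr p) \<partial>LI)"
    by (rule nn_integral_cmult) (use f_meas in measurable)
  finally show ?thesis .
qed

lemma Mhat_Lp:
  assumes n: "n \<ge> 1" and p: "p \<ge> 1" and f: "Lp_mem p f"
  shows "Lp_mem p (Mhat n f)" "Lp_norm p (Mhat n f) \<le> 2 powr (1 / p) * Lp_norm p f"
proof -
  have meas: "Mhat n f \<in> borel_measurable LI" by (rule Mhat_measurable[OF Lp_mem_measurable[OF f]])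
  have bound: "(\<integral>\<^sup>+ x. ennreal (\<bar>Mhat n f x\<bar> powr p) \<partial>LI) \<le> ennreal (2 * Lp_norm p f powr p)"
    using nn_integral_Mhat_abs_powr_le[OF n p f]
    unfolding nn_integral_abs_powr_eq_Lp_norm[OF p f] by (simp add: ennreal_mult)
  show Lp: "Lp_mem p (Mhat n f)"
    using bound Lp_mem_iff_nn_integral[OF meas] by (auto simp: le_less_trans)
  have "Lp_norm p (Mhat n f) powr p \<le> 2 * Lp_norm p f powr p"
    using bound unfolding nn_integral_abs_powr_eq_Lp_norm[OF p Lp] by (simp add: ennreal_le_iff)
  then have "(Lp_norm p (Mhat n f) powr p) powr (1 / p) \<le> (2 * Lp_norm p f powr p) powr (1 / p)"
    using p by (intro powr_mono2) auto
  then show "Lp_norm p (Mhat n f) \<le> 2 powr (1 / p) * Lp_norm p f"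
    using p by (simp add: powr_powr powr_mult Lp_norm_nonneg)
qed

lemma Mhat_linear:
  assumes n: "n \<ge> 1" and p: "p \<ge> 1" and f: "Lp_mem p f" "Lp_mem p g" and t: "t \<in> {0..1}"
  shows "Mhat n (\<lambda>s. c * f s + d * g s) t = c * Mhat n f t + d * Mhat n g t"
proof (cases "t = 1")
  case False
  then have t: "0 \<le> t" "t < 1" using t by auto
  have "integrable LI (\<lambda>s. Hn n t s * f s)" "integrable LI (\<lambda>s. Hn n t s * g s)"
    using integrable_Hn_mult[OF n t integrable_Lp[OF p]] f by auto
  then show ?thesis unfolding Mhat_def by (simp add: algebra_simps)
qed (simp add: Mhat_at_1[OF n])

section \<open>Gluing affine copies of functions on \<open>I\<close>\<close>

locale affine_partition =
  fixes N :: nat and xs a b :: "nat \<Rightarrow> real"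
  assumes x0: "xs 0 = 0" and xN: "xs N = 1"
    and xs_Suc: "\<forall>i<N. xs i < xs (Suc i)"
    and affine: "\<forall>i\<in>{1..N}. a i * 0 + b i = xs (i - 1) \<and> a i * 1 + b i = xs i"
begin

lemma xs_strict_mono: "i < j \<Longrightarrow> j \<le> N \<Longrightarrow> xs i < xs j"
proof (induction j)
  case (Suc j)
  then have "xs j < xs (Suc j)" using xs_Suc by auto
  then show ?case using Suc by (cases "i = j") auto
qed simp

lemma xs_mono: "i \<le> j \<Longrightarrow> j \<le> N \<Longrightarrow> xs i \<le> xs j"
  using xs_strict_mono by (cases "i = j") (auto intro: less_imp_le)

lemma xs_bounds: "i \<le> N \<Longrightarrow> 0 \<le> xs i \<and> xs i \<le> 1"
  using xs_mono[of 0 i] xs_mono[of i N] x0 xN by auto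

lemma piece_coeffs:
  assumes i: "i \<in> {1..N}"
  shows "b i = xs (i - 1)" "a i = xs i - xs (i - 1)" "a i > 0" "0 \<le> b i" "a i + b i \<le> 1"
proof -
  have "a i * 0 + b i = xs (i - 1) \<and> a i * 1 + b i = xs i" using affine i by blast
  then show b: "b i = xs (i - 1)" and a: "a i = xs i - xs (i - 1)" by auto
  show "a i > 0" using a xs_strict_mono[of "i - 1" i] i by auto
  show "0 \<le> b i" using b xs_bounds[of "i - 1"] i by auto
  show "a i + b i \<le> 1" using a b xs_bounds[of i] i by auto
qed

lemma piece_eq:
  assumes i: "i \<in> {1..N}"
  shows "(\<lambda>t. a i * t + b i) ` {0..1} = {b i..a i + b i}"
proof (intro set_eqI iffI)
  have a: "a i > 0" using piece_coeffs(3)[OF i] .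
  fix y
  show "y \<in> (\<lambda>t. a i * t + b i) ` {0..1} \<Longrightarrow> y \<in> {b i..a i + b i}"
    using a by (auto simp: mult_le_cancel_left1)
  assume y: "y \<in> {b i..a i + b i}"
  have "y = a i * ((y - b i) / a i) + b i" and "(y - b i) / a i \<in> {0..1}"
    using y a by (auto simp: field_simps)
  then show "y \<in> (\<lambda>t. a i * t + b i) ` {0..1}" by blast
qed

lemma inverse_in_piece:
  assumes "i \<in> {1..N}" and "y \<in> (\<lambda>t. a i * t + b i) ` {0..1}"
  shows "(y - b i) / a i \<in> {0..1}"
  using assms piece_coeffs(3)[OF assms(1)] by auto

lemma pieces_meet_at_knots:
  assumes i: "i \<in> {1..N}" and j: "j \<in> {1..N}" and "i \<noteq> j"
    and y: "y \<in> {b i..a i + b i}" "y \<in> {b j..a j + b j}"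
  shows "y \<in> xs ` {..N}"
proof -
  have meet: "y = xs k"
    if "k \<in> {1..N}" "l \<in> {1..N}" "k < l" "y \<in> {xs (k - 1)..xs k}" "y \<in> {xs (l - 1)..xs l}" for k l
  proof -
    have "xs k \<le> xs (l - 1)" using xs_mono[of k "l - 1"] that by auto
    then show ?thesis using that by auto
  qed
  have pieces: "{b k..a k + b k} = {xs (k - 1)..xs k}" if "k \<in> {1..N}" for k
    using piece_coeffs[OF that] by simp
  have "y = xs i \<or> y = xs j"
  proof (cases "i < j")
    case True
    then show ?thesis using meet[of i j] pieces[OF i] pieces[OF j] i j y by simp
  next
    case False
    then have "j < i" using \<open>i \<noteq> j\<close> by simp
    then show ?thesis using meet[of j i] pieces[OF i] pieces[OF j] i j y by simp
  qed
  then show ?thesis using i j by auto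
qed

lemma borel_measurable_piece:
  fixes \<psi> :: "real \<Rightarrow> 'b::{topological_space, semiring_1}"
  assumes "i \<in> {1..N}" and "\<psi> \<in> borel_measurable LI"
  shows "(\<lambda>y. \<psi> ((y - b i) / a i) * indicator ((\<lambda>t. a i * t + b i) ` {0..1}) y) \<in> borel_measurable LI"
  unfolding piece_eq[OF assms(1)] using piece_coeffs(3)[OF assms(1)] assms(2)
  by (rule borel_measurable_affine_piece)

definition glue :: "(nat \<Rightarrow> real \<Rightarrow> real) \<Rightarrow> real \<Rightarrow> real" where
  "glue \<psi> y = (\<Sum>i=1..N. \<psi> i ((y - b i) / a i) * indicator ((\<lambda>t. a i * t + b i) ` {0..1}) y)"

lemma glue_measurable:
  assumes "\<And>i. i \<in> {1..N} \<Longrightarrow> \<psi> i \<in> borel_measurable LI"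
  shows "glue \<psi> \<in> borel_measurable LI"
  unfolding glue_def by (rule borel_measurable_sum, rule borel_measurable_piece) (auto intro: assms)

lemma nn_integral_glue:
  fixes \<psi> :: "nat \<Rightarrow> real \<Rightarrow> ennreal"
  assumes "\<And>i. i \<in> {1..N} \<Longrightarrow> \<psi> i \<in> borel_measurable LI"
  shows "(\<integral>\<^sup>+ y. (\<Sum>i=1..N. \<psi> i ((y - b i) / a i) * indicator ((\<lambda>t. a i * t + b i) ` {0..1}) y) \<partial>LI)
       = (\<Sum>i=1..N. ennreal (a i) * (\<integral>\<^sup>+ t. \<psi> i t \<partial>LI))"
proof -
  have "(\<integral>\<^sup>+ y. (\<Sum>i=1..N. \<psi> i ((y - b i) / a i) * indicator ((\<lambda>t. a i * t + b i) ` {0..1}) y) \<partial>LI)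
      = (\<integral>\<^sup>+ y. (\<Sum>i=1..N. \<psi> i ((y - b i) / a i) * indicator {b i..a i + b i} y) \<partial>LI)"
    by (intro nn_integral_cong sum.cong) (auto simp: piece_eq)
  also have "\<dots> = (\<Sum>i=1..N. (\<integral>\<^sup>+ y. \<psi> i ((y - b i) / a i) * indicator {b i..a i + b i} y \<partial>LI))"
    using assms by (intro nn_integral_sum borel_measurable_affine_piece piece_coeffs(3))
  also have "\<dots> = (\<Sum>i=1..N. ennreal (a i) * (\<integral>\<^sup>+ t. \<psi> i t \<partial>LI))"
    using assms by (intro sum.cong refl nn_integral_affine_piece piece_coeffs)
  finally show ?thesis .
qed

text \<open>Off the finitely many knots at most one summand of \<open>glue \<psi>\<close> is nonzero.\<close>
lemma abs_glue_powr:
  assumes y: "y \<notin> xs ` {..N}"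
  shows "\<bar>glue \<psi> y\<bar> powr p
    = (\<Sum>i=1..N. \<bar>\<psi> i ((y - b i) / a i)\<bar> powr p * indicator ((\<lambda>t. a i * t + b i) ` {0..1}) y)"
proof (cases "\<exists>j\<in>{1..N}. y \<in> (\<lambda>t. a j * t + b j) ` {0..1}")
  case True
  then obtain j where j: "j \<in> {1..N}" "y \<in> (\<lambda>t. a j * t + b j) ` {0..1}" by blast
  have other: "y \<notin> (\<lambda>t. a i * t + b i) ` {0..1}" if "i \<in> {1..N}" "i \<noteq> j" for i
    using pieces_meet_at_knots[of i j y] piece_eq that j y by auto
  have "glue \<psi> y = \<psi> j ((y - b j) / a j)"
    unfolding glue_def using j other by (subst sum.remove[of _ j]) (auto intro!: sum.neutral)
  moreover have "(\<Sum>i=1..N. \<bar>\<psi> i ((y - b i) / a i)\<bar> powr p * indicator ((\<lambda>t. a i * t + b i) ` {0..1}) y)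
      = \<bar>\<psi> j ((y - b j) / a j)\<bar> powr p"
    using j other by (subst sum.remove[of _ j]) (auto intro!: sum.neutral)
  ultimately show ?thesis by simp
qed (auto simp: glue_def intro!: sum.neutral)

lemma Lp_glue:
  assumes p: "p \<ge> 1" and \<psi>: "\<And>i. i \<in> {1..N} \<Longrightarrow> Lp_mem p (\<psi> i)"
  shows "Lp_mem p (glue \<psi>)" "Lp_norm p (glue \<psi>) powr p = (\<Sum>i=1..N. a i * Lp_norm p (\<psi> i) powr p)"
proof -
  have meas: "\<psi> i \<in> borel_measurable LI" if "i \<in> {1..N}" for i
    using \<psi>[OF that] by (rule Lp_mem_measurable)
  have nonneg: "0 \<le> (\<Sum>i=1..N. a i * Lp_norm p (\<psi> i) powr p)"
    using piece_coeffs(3) by (intro sum_nonneg) (simp add: less_imp_le)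
  have "AE y in LI. y \<notin> xs ` {..N}" by (rule AE_LI_not_in_finite) simp
  then have "AE y in LI. ennreal (\<bar>glue \<psi> y\<bar> powr p)
      = (\<Sum>i=1..N. ennreal (\<bar>\<psi> i ((y - b i) / a i)\<bar> powr p) * indicator ((\<lambda>t. a i * t + b i) ` {0..1}) y)"
  proof eventually_elim
    case (elim y)
    show ?case unfolding abs_glue_powr[OF elim]
      by (subst sum_ennreal[symmetric]) (auto simp: indicator_def intro!: sum.cong)
  qed
  then have "(\<integral>\<^sup>+ y. ennreal (\<bar>glue \<psi> y\<bar> powr p) \<partial>LI)
      = (\<integral>\<^sup>+ y. (\<Sum>i=1..N. ennreal (\<bar>\<psi> i ((y - b i) / a i)\<bar> powr p) * indicator ((\<lambda>t. a i * t + b i) ` {0..1}) y) \<partial>LI)"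
    by (rule nn_integral_cong_AE)
  also have "\<dots> = (\<Sum>i=1..N. ennreal (a i) * (\<integral>\<^sup>+ t. ennreal (\<bar>\<psi> i t\<bar> powr p) \<partial>LI))"
    by (rule nn_integral_glue) (use meas in auto)
  also have "\<dots> = (\<Sum>i=1..N. ennreal (a i * Lp_norm p (\<psi> i) powr p))"
  proof (intro sum.cong refl)
    fix i assume i: "i \<in> {1..N}"
    show "ennreal (a i) * (\<integral>\<^sup>+ t. ennreal (\<bar>\<psi> i t\<bar> powr p) \<partial>LI) = ennreal (a i * Lp_norm p (\<psi> i) powr p)"
      using nn_integral_abs_powr_eq_Lp_norm[OF p \<psi>[OF i]] piece_coeffs(3)[OF i] by (simp add: ennreal_mult)
  qed
  also have "\<dots> = ennreal (\<Sum>i=1..N. a i * Lp_norm p (\<psi> i) powr p)"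
    using piece_coeffs(3) by (intro sum_ennreal) (simp add: less_imp_le)
  finally have glue_int: "(\<integral>\<^sup>+ y. ennreal (\<bar>glue \<psi> y\<bar> powr p) \<partial>LI)
      = ennreal (\<Sum>i=1..N. a i * Lp_norm p (\<psi> i) powr p)" .
  show Lp: "Lp_mem p (glue \<psi>)"
    using Lp_mem_iff_nn_integral[OF glue_measurable[OF meas]] glue_int by simp
  show "Lp_norm p (glue \<psi>) powr p = (\<Sum>i=1..N. a i * Lp_norm p (\<psi> i) powr p)"
    using nn_integral_abs_powr_eq_Lp_norm[OF p Lp] glue_int nonneg by simp
qed

text \<open>Null sets pull back to null sets under each \<open>u\<^sub>i\<^sup>-\<^sup>1\<close>, since the change of variables only
  scales measures by \<open>a\<^sub>i\<close>.\<close>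
lemma AE_pullback:
  assumes "AE t in LI. P t"
  shows "AE y in LI. \<forall>i\<in>{1..N}. y \<in> (\<lambda>t. a i * t + b i) ` {0..1} \<longrightarrow> P ((y - b i) / a i)"
proof -
  from assms obtain Z where Z: "{x \<in> space LI. \<not> P x} \<subseteq> Z" "emeasure LI Z = 0" "Z \<in> sets LI"
    by (rule AE_E)
  define F where "F y = (\<Sum>i=1..N. indicator Z ((y - b i) / a i) * indicator ((\<lambda>t. a i * t + b i) ` {0..1}) y :: ennreal)" for y
  have "F \<in> borel_measurable LI"
    unfolding F_def[abs_def] using Z(3)
    by (intro borel_measurable_sum) (rule borel_measurable_piece; simp)
  moreover have "(\<integral>\<^sup>+ y. F y \<partial>LI) = 0"
    unfolding F_def using Z(2,3) by (subst nn_integral_glue) auto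
  ultimately have "AE y in LI. F y = 0" by (simp add: nn_integral_0_iff_AE)
  then show ?thesis
  proof eventually_elim
    case (elim y)
    show ?case
    proof (intro ballI impI)
      fix i assume i: "i \<in> {1..N}" and y: "y \<in> (\<lambda>t. a i * t + b i) ` {0..1}"
      then have "(y - b i) / a i \<notin> Z"
        using elim unfolding F_def by (subst (asm) sum_eq_0_iff) (auto simp: indicator_def)
      then show "P ((y - b i) / a i)" using Z(1) inverse_in_piece[OF i y] by auto
    qed
  qed
qed

end

section \<open>The fractal operator\<close>

locale mkz_fractal = affine_partition +
  fixes p :: real and alpha :: "nat \<Rightarrow> real \<Rightarrow> real" and n :: nat
  assumes p: "p \<ge> 1" and alpha: "\<forall>i\<in>{1..N}. Linf_mem (alpha i)" and n: "n \<ge> 1"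
begin

definition Lambda :: real where
  "Lambda = (\<Sum>i=1..N. a i * Linf_norm (alpha i) powr p) powr (1 / p)"

definition Aop :: "(real \<Rightarrow> real) \<Rightarrow> real \<Rightarrow> real" where
  "Aop g = glue (\<lambda>i t. alpha i t * g t)"

lemma Lambda_nonneg: "Lambda \<ge> 0"
  by (simp add: Lambda_def)

lemma Lambda_powr: "Lambda powr p = (\<Sum>i=1..N. a i * Linf_norm (alpha i) powr p)"
proof -
  have "(\<Sum>i=1..N. a i * Linf_norm (alpha i) powr p) \<ge> 0"
    using piece_coeffs(3) by (intro sum_nonneg) (simp add: less_imp_le)
  then show ?thesis unfolding Lambda_def using p by (simp add: powr_powr)
qed

lemma Aop_Lp:
  assumes g: "Lp_mem p g"
  shows "Lp_mem p (Aop g)" "Lp_norm p (Aop g) \<le> Lambda * Lp_norm p g"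
proof -
  have alpha_g: "Lp_mem p (\<lambda>t. alpha i t * g t)" if "i \<in> {1..N}" for i
    using Lp_mult_Linf(1)[OF p _ g] alpha that by auto
  show "Lp_mem p (Aop g)" unfolding Aop_def by (rule Lp_glue(1)[OF p alpha_g])
  have "Lp_norm p (Aop g) powr p = (\<Sum>i=1..N. a i * Lp_norm p (\<lambda>t. alpha i t * g t) powr p)"
    unfolding Aop_def by (rule Lp_glue(2)[OF p alpha_g])
  also have "\<dots> \<le> (\<Sum>i=1..N. a i * (Linf_norm (alpha i) * Lp_norm p g) powr p)"
  proof (rule sum_mono)
    fix i assume i: "i \<in> {1..N}"
    have "Lp_norm p (\<lambda>t. alpha i t * g t) powr p \<le> (Linf_norm (alpha i) * Lp_norm p g) powr p"
      using Lp_mult_Linf(2)[OF p _ g] alpha i p by (intro powr_mono2) (auto simp: Lp_norm_nonneg)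
    then show "a i * Lp_norm p (\<lambda>t. alpha i t * g t) powr p \<le> a i * (Linf_norm (alpha i) * Lp_norm p g) powr p"
      using piece_coeffs(3)[OF i] by (intro mult_left_mono) auto
  qed
  also have "\<dots> = (Lambda * Lp_norm p g) powr p"
    using alpha by (auto simp: Lambda_powr powr_mult Lambda_nonneg Lp_norm_nonneg Linf_norm_bound(2)
        sum_distrib_right intro!: sum.cong)
  finally have "Lp_norm p (Aop g) powr p \<le> (Lambda * Lp_norm p g) powr p" .
  then show "Lp_norm p (Aop g) \<le> Lambda * Lp_norm p g"
    using p powr_less_mono2[of p "Lambda * Lp_norm p g" "Lp_norm p (Aop g)"]
    by (force simp: Lambda_nonneg Lp_norm_nonneg)
qed

lemma Aop_linear: "Aop (\<lambda>t. c * g t + d * h t) y = c * Aop g y + d * Aop h y"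
  unfolding Aop_def glue_def by (simp add: sum_distrib_left sum.distrib[symmetric] algebra_simps)

lemma Aop_diff: "Aop (\<lambda>t. g t - h t) y = Aop g y - Aop h y"
  using Aop_linear[of 1 g "-1" h y] by simp

lemma Aop_cong:
  assumes "\<And>t. t \<in> {0..1} \<Longrightarrow> g t = h t"
  shows "Aop g y = Aop h y"
  unfolding Aop_def glue_def
  using assms inverse_in_piece by (intro sum.cong refl) (auto simp: indicator_def)

lemma Top_eq_Aop: "Top n N a b alpha f g y = f y - Aop (Mhat n f) y + Aop g y"
  using Aop_diff[of g "Mhat n f" y]
  unfolding Top_def Aop_def glue_def by (simp add: mult.assoc)

lemma Lp_mem_Top:
  assumes "Lp_mem p f" and "Lp_mem p g"
  shows "Lp_mem p (Top n N a b alpha f g)"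
  unfolding Top_eq_Aop[abs_def]
  using assms Lp_mem_add[OF p Lp_mem_diff[OF p] Aop_Lp(1)] Aop_Lp(1)[OF Mhat_Lp(1)[OF n p]]
  by blast

lemma Lp_norm_Top_diff_le:
  assumes "Lp_mem p g" and "Lp_mem p h"
  shows "Lp_norm p (\<lambda>y. Top n N a b alpha f g y - Top n N a b alpha f h y)
    \<le> Lambda * Lp_norm p (\<lambda>y. g y - h y)"
proof -
  have "(\<lambda>y. Top n N a b alpha f g y - Top n N a b alpha f h y) = Aop (\<lambda>t. g t - h t)"
    by (simp add: fun_eq_iff Top_eq_Aop Aop_diff)
  then show ?thesis using Aop_Lp(2)[OF Lp_mem_diff[OF p assms]] by simp
qed

lemma Aop_power_Lp:
  assumes h: "Lp_mem p h"
  shows "Lp_mem p ((Aop ^^ m) h) \<and> Lp_norm p ((Aop ^^ m) h) \<le> Lambda ^ m * Lp_norm p h"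
proof (induction m)
  case (Suc m)
  have "Lp_norm p ((Aop ^^ Suc m) h) \<le> Lambda * Lp_norm p ((Aop ^^ m) h)"
    using Aop_Lp(2) Suc by simp
  also have "\<dots> \<le> Lambda * (Lambda ^ m * Lp_norm p h)"
    using Suc Lambda_nonneg by (intro mult_left_mono) auto
  finally show ?case using Aop_Lp(1) Suc by simp
qed (use h in simp)

lemma Aop_suminf:
  assumes "\<And>i. i \<in> {1..N} \<Longrightarrow> y \<in> (\<lambda>t. a i * t + b i) ` {0..1} \<Longrightarrow> summable (\<lambda>m. g m ((y - b i) / a i))"
  shows "(\<Sum>m. Aop (g m) y) = Aop (\<lambda>t. \<Sum>m. g m t) y"
proof -
  let ?term = "\<lambda>i m. alpha i ((y - b i) / a i) * g m ((y - b i) / a i) * indicator ((\<lambda>t. a i * t + b i) ` {0..1}) y"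
  have summable: "summable (?term i)" and sums: "(\<Sum>m. ?term i m)
      = alpha i ((y - b i) / a i) * (\<Sum>m. g m ((y - b i) / a i)) * indicator ((\<lambda>t. a i * t + b i) ` {0..1}) y"
    if "i \<in> {1..N}" for i
    using assms[OF that] by (cases "y \<in> (\<lambda>t. a i * t + b i) ` {0..1}"; simp add: suminf_mult summable_mult)+
  have "(\<Sum>m. Aop (g m) y) = (\<Sum>m. \<Sum>i=1..N. ?term i m)"
    by (simp add: Aop_def glue_def)
  also have "\<dots> = (\<Sum>i=1..N. \<Sum>m. ?term i m)"
    using summable by (rule suminf_sum)
  also have "\<dots> = Aop (\<lambda>t. \<Sum>m. g m t) y"
    using sums by (simp add: Aop_def glue_def)
  finally show ?thesis .
qed

context
  assumes Lambda_less_1: "Lambda < 1"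
begin

text \<open>The a.e.\ convergence of the series must be transported along each \<open>u\<^sub>i\<^sup>-\<^sup>1\<close> before \<open>A\<close>
  can be moved inside it.\<close>
lemma Neumann_series:
  assumes h: "Lp_mem p h"
  defines "S \<equiv> \<lambda>y. \<Sum>m. (Aop ^^ m) h y"
  shows "Lp_mem p S" "AE y in LI. S y = h y + Aop S y"
proof -
  have summable: "summable (\<lambda>m. Lp_norm p ((Aop ^^ m) h))"
  proof (rule summable_comparison_test)
    show "\<exists>N0. \<forall>m\<ge>N0. norm (Lp_norm p ((Aop ^^ m) h)) \<le> Lambda ^ m * Lp_norm p h"
      using Aop_power_Lp[OF h] by (auto simp: Lp_norm_nonneg)
    show "summable (\<lambda>m. Lambda ^ m * Lp_norm p h)"
      using Lambda_less_1 Lambda_nonneg by (intro summable_mult2 summable_geometric) auto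
  qed
  note series = Lp_mem_suminf[OF p _ summable, OF conjunct1[OF Aop_power_Lp[OF h]]]
  show "Lp_mem p S" using series(2) by (simp add: S_def)
  show "AE y in LI. S y = h y + Aop S y"
    using series(1) AE_pullback[OF series(1)]
  proof eventually_elim
    case (elim y)
    have "S y = h y + (\<Sum>m. (Aop ^^ Suc m) h y)"
      using suminf_split_head[OF summable_rabs_cancel[OF elim(1)]] by (simp add: S_def)
    also have "(\<Sum>m. (Aop ^^ Suc m) h y) = Aop S y"
      unfolding S_def funpow.simps comp_def
    proof (rule Aop_suminf)
      fix i assume "i \<in> {1..N}" and "y \<in> (\<lambda>t. a i * t + b i) ` {0..1}"
      then show "summable (\<lambda>m. (Aop ^^ m) h ((y - b i) / a i))"
        using elim(2) by (blast intro: summable_rabs_cancel)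
    qed
    finally show ?case .
  qed
qed

lemma Top_fixed_point_unique:
  assumes g: "Lp_mem p g" and h: "Lp_mem p h"
    and g_fix: "AE y in LI. g y = Top n N a b alpha f g y"
    and h_fix: "AE y in LI. h y = Top n N a b alpha f h y"
  shows "AE y in LI. g y = h y"
proof -
  have diff: "Lp_mem p (\<lambda>y. g y - h y)" by (rule Lp_mem_diff[OF p g h])
  have "AE y in LI. g y - h y = Aop (\<lambda>t. g t - h t) y"
    using g_fix h_fix by eventually_elim (simp add: Top_eq_Aop Aop_diff)
  then have "Lp_norm p (\<lambda>y. g y - h y) = Lp_norm p (Aop (\<lambda>t. g t - h t))"
    by (rule Lp_AE_cong(1)[rotated 2])
      (use Lp_mem_measurable[OF diff] Lp_mem_measurable[OF Aop_Lp(1)[OF diff]] in auto)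
  also have "\<dots> \<le> Lambda * Lp_norm p (\<lambda>y. g y - h y)" by (rule Aop_Lp(2)[OF diff])
  finally have "(1 - Lambda) * Lp_norm p (\<lambda>y. g y - h y) \<le> 0" by (simp add: algebra_simps)
  then have "Lp_norm p (\<lambda>y. g y - h y) = 0"
    using Lambda_less_1 Lp_norm_nonneg[of p "\<lambda>y. g y - h y"] by (simp add: mult_le_0_iff)
  from Lp_norm_eq_0_AE[OF p diff this] show ?thesis by eventually_elim simp
qed

text \<open>The Neumann series for \<open>(I - A)\<^sup>-\<^sup>1 (f - A M\<^sub>n f)\<close>, the fixed point of
  \<open>T g = f - A M\<^sub>n f + A g\<close>.\<close>
definition fractal_fun :: "(real \<Rightarrow> real) \<Rightarrow> real \<Rightarrow> real" where
  "fractal_fun f = (\<lambda>y. \<Sum>m. (Aop ^^ m) (\<lambda>t. f t - Aop (Mhat n f) t) y)"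

lemma Lp_mem_fractal_fun_offset:
  "Lp_mem p f \<Longrightarrow> Lp_mem p (\<lambda>t. f t - Aop (Mhat n f) t)"
  by (rule Lp_mem_diff[OF p _ Aop_Lp(1)[OF Mhat_Lp(1)[OF n p]]])

lemma Lp_mem_fractal_fun: "Lp_mem p f \<Longrightarrow> Lp_mem p (fractal_fun f)"
  unfolding fractal_fun_def by (rule Neumann_series(1)[OF Lp_mem_fractal_fun_offset])

lemma fractal_fun_fixed_point:
  "Lp_mem p f \<Longrightarrow> AE y in LI. fractal_fun f y = Top n N a b alpha f (fractal_fun f) y"
  using Neumann_series(2)[OF Lp_mem_fractal_fun_offset]
  unfolding Top_eq_Aop fractal_fun_def by simp

lemma fractal_fun_unique:
  assumes "Lp_mem p f" and "Lp_mem p g" and "AE y in LI. g y = Top n N a b alpha f g y"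
  shows "AE y in LI. g y = fractal_fun f y"
  using Top_fixed_point_unique[OF assms(2) Lp_mem_fractal_fun[OF assms(1)] assms(3)
      fractal_fun_fixed_point[OF assms(1)]] .

text \<open>By uniqueness it suffices that \<open>c f\<^sup>\<alpha> f\<^sub>1 + d f\<^sup>\<alpha> f\<^sub>2\<close> is a fixed point of the operator for
  \<open>c f\<^sub>1 + d f\<^sub>2\<close>, which holds as \<open>M\<^sub>n\<close> is linear on \<open>I\<close> and \<open>A\<close> only sees values on \<open>I\<close>.\<close>
lemma fractal_fun_linear:
  assumes f1: "Lp_mem p f1" and f2: "Lp_mem p f2"
  shows "AE y in LI. fractal_fun (\<lambda>t. c * f1 t + d * f2 t) y = c * fractal_fun f1 y + d * fractal_fun f2 y"
proof -
  define G where "G y = c * fractal_fun f1 y + d * fractal_fun f2 y" for y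
  have Top_G: "Top n N a b alpha (\<lambda>t. c * f1 t + d * f2 t) G y
      = c * Top n N a b alpha f1 (fractal_fun f1) y + d * Top n N a b alpha f2 (fractal_fun f2) y" for y
  proof -
    have "Aop (\<lambda>t. G t - Mhat n (\<lambda>t. c * f1 t + d * f2 t) t) y
        = Aop (\<lambda>t. c * (fractal_fun f1 t - Mhat n f1 t) + d * (fractal_fun f2 t - Mhat n f2 t)) y"
      by (rule Aop_cong) (simp add: G_def Mhat_linear[OF n p f1 f2] algebra_simps)
    then show ?thesis
      unfolding Top_eq_Aop Aop_linear by (simp add: Aop_diff algebra_simps)
  qed
  have G_fix: "AE y in LI. G y = Top n N a b alpha (\<lambda>t. c * f1 t + d * f2 t) G y"
    using fractal_fun_fixed_point[OF f1] fractal_fun_fixed_point[OF f2]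
    by eventually_elim (simp add: Top_G G_def)
  have G: "Lp_mem p G"
    unfolding G_def using Lp_mem_add[OF p Lp_mem_cmult Lp_mem_cmult] Lp_mem_fractal_fun f1 f2 by blast
  have "Lp_mem p (\<lambda>t. c * f1 t + d * f2 t)"
    using Lp_mem_add[OF p Lp_mem_cmult Lp_mem_cmult] f1 f2 by blast
  from fractal_fun_unique[OF this G G_fix] show ?thesis
    by eventually_elim (simp add: G_def)
qed

lemma Lp_norm_fractal_fun_le:
  assumes f: "Lp_mem p f"
  shows "Lp_norm p (fractal_fun f) \<le> (1 + Lambda * 2 powr (1 / p)) / (1 - Lambda) * Lp_norm p f"
proof -
  let ?F = "fractal_fun f" and ?h = "\<lambda>t. f t - Aop (Mhat n f) t"
  have F: "Lp_mem p ?F" by (rule Lp_mem_fractal_fun[OF f])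
  have AF: "Lp_mem p (Aop ?F)" by (rule Aop_Lp(1)[OF F])
  have "AE y in LI. ?F y = ?h y + Aop ?F y"
    using fractal_fun_fixed_point[OF f] by eventually_elim (simp add: Top_eq_Aop)
  then have "Lp_norm p ?F = Lp_norm p (\<lambda>y. ?h y + Aop ?F y)"
    by (rule Lp_AE_cong(1)[rotated 2])
      (use Lp_mem_measurable[OF F] Lp_mem_measurable[OF Lp_mem_add[OF p Lp_mem_fractal_fun_offset[OF f] AF]]
        in auto)
  also have "\<dots> \<le> Lp_norm p ?h + Lp_norm p (Aop ?F)"
    by (rule Lp_norm_triangle[OF p Lp_mem_fractal_fun_offset[OF f] AF])
  also have "Lp_norm p ?h \<le> Lp_norm p f + Lp_norm p (Aop (Mhat n f))"
    by (rule Lp_norm_triangle_diff[OF p f Aop_Lp(1)[OF Mhat_Lp(1)[OF n p f]]])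
  also have "Lp_norm p (Aop (Mhat n f)) \<le> Lambda * (2 powr (1 / p) * Lp_norm p f)"
    using Aop_Lp(2)[OF Mhat_Lp(1)[OF n p f]] Mhat_Lp(2)[OF n p f] Lambda_nonneg
    by (meson mult_left_mono order_trans)
  also have "Lp_norm p (Aop ?F) \<le> Lambda * Lp_norm p ?F" by (rule Aop_Lp(2)[OF F])
  finally have "(1 - Lambda) * Lp_norm p ?F \<le> (1 + Lambda * 2 powr (1 / p)) * Lp_norm p f"
    by (simp add: algebra_simps)
  then show ?thesis using Lambda_less_1 by (simp add: field_simps)
qed

end

end

theorem theorem6p2:
  fixes p :: real and n N :: nat and xs a b :: "nat \<Rightarrow> real"
    and alpha :: "nat \<Rightarrow> real \<Rightarrow> real" and f :: "real \<Rightarrow> real" and \<Lambda> :: real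
  assumes p: "p \<ge> 1"
    and n: "n \<ge> 1"
    and N: "N \<ge> 1"
    and x0: "xs 0 = 0" and xN: "xs N = 1"
    and xmono: "\<forall>i<N. xs i < xs (Suc i)"
    and u: "\<forall>i\<in>{1..N}. a i * 0 + b i = xs (i - 1) \<and> a i * 1 + b i = xs i"
    and alpha: "\<forall>i\<in>{1..N}. Linf_mem (alpha i)"
    and Lam: "\<Lambda> = (\<Sum>i=1..N. a i * Linf_norm (alpha i) powr p) powr (1 / p)"
    and Lam1: "\<Lambda> < 1"
    and f: "Lp_mem p f"
  shows "(\<forall>g. Lp_mem p g \<longrightarrow> Lp_mem p (Top n N a b alpha f g))
    \<and> (\<forall>g h. Lp_mem p g \<and> Lp_mem p h \<longrightarrow>
          Lp_norm p (\<lambda>y. Top n N a b alpha f g y - Top n N a b alpha f h y)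
            \<le> \<Lambda> * Lp_norm p (\<lambda>y. g y - h y))
    \<and> (\<exists>F :: (real \<Rightarrow> real) \<Rightarrow> real \<Rightarrow> real.
         (\<forall>f'. Lp_mem p f' \<longrightarrow>
            Lp_mem p (F f')
            \<and> (AE y in LI. F f' y = Top n N a b alpha f' (F f') y)
            \<and> (\<forall>g. Lp_mem p g \<and> (AE y in LI. g y = Top n N a b alpha f' g y)
                   \<longrightarrow> (AE y in LI. g y = F f' y)))
         \<and> (\<forall>f1 f2 c d. Lp_mem p f1 \<and> Lp_mem p f2 \<longrightarrow>
              (AE y in LI. F (\<lambda>t. c * f1 t + d * f2 t) y = c * F f1 y + d * F f2 y))
         \<and> (\<exists>C. \<forall>f'. Lp_mem p f' \<longrightarrow> Lp_norm p (F f') \<le> C * Lp_norm p f'))"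
proof -
  interpret mkz_fractal N xs a b p alpha n
    using x0 xN xmono u p alpha n by unfold_locales
  have Lambda: "\<Lambda> = Lambda" and Lambda_less_1: "Lambda < 1"
    using Lam Lam1 by (simp_all add: Lambda_def)
  have Top: "\<forall>g. Lp_mem p g \<longrightarrow> Lp_mem p (Top n N a b alpha f g)"
    using Lp_mem_Top[OF f] by blast
  have contraction: "\<forall>g h. Lp_mem p g \<and> Lp_mem p h \<longrightarrow>
      Lp_norm p (\<lambda>y. Top n N a b alpha f g y - Top n N a b alpha f h y) \<le> Lambda * Lp_norm p (\<lambda>y. g y - h y)"
    using Lp_norm_Top_diff_le by blast
  have fixed_point: "\<forall>f'. Lp_mem p f' \<longrightarrow> Lp_mem p (fractal_fun f')
      \<and> (AE y in LI. fractal_fun f' y = Top n N a b alpha f' (fractal_fun f') y)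
      \<and> (\<forall>g. Lp_mem p g \<and> (AE y in LI. g y = Top n N a b alpha f' g y)
             \<longrightarrow> (AE y in LI. g y = fractal_fun f' y))"
    using Lp_mem_fractal_fun[OF Lambda_less_1] fractal_fun_fixed_point[OF Lambda_less_1]
      fractal_fun_unique[OF Lambda_less_1] by blast
  have linear: "\<forall>f1 f2 c d. Lp_mem p f1 \<and> Lp_mem p f2 \<longrightarrow> (AE y in LI.
      fractal_fun (\<lambda>t. c * f1 t + d * f2 t) y = c * fractal_fun f1 y + d * fractal_fun f2 y)"
    using fractal_fun_linear[OF Lambda_less_1] by blast
  have bounded: "\<exists>C. \<forall>f'. Lp_mem p f' \<longrightarrow> Lp_norm p (fractal_fun f') \<le> C * Lp_norm p f'"
    using Lp_norm_fractal_fun_le[OF Lambda_less_1] by blast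
  show ?thesis
    unfolding Lambda
    by (intro conjI exI[of _ fractal_fun] Top contraction fixed_point linear bounded)
qed

end
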